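(* Each of the following two sets of $8\times 8$ matrices is a minimal generating set for $\mathrm{O}(8,\mathbb{D})$ (it generates $\mathrm{O}(8,\mathbb{D})$ and no proper subset of it generates $\mathrm{O}(8,\mathbb{D})$): (1) $\Sigma_K=\{X_0,\ CX_{0,1},\ CCX_{1,2},\ K_{[0,1,2,3]}\}$; (2) $\Sigma_Z=\{X_0,\ CX_{0,1},\ CCX_{1,2},\ K_{1,2},\ CCZ\}$.
   Context: $\mathbb{D}=\mathbb{Z}[1/2]$ and $\mathrm{O}(8,\mathbb{D})$ is the group of $8\times8$ orthogonal matrices with entries in $\mathbb{D}$. Qubits are labelled $0,1,2$; $|x_0x_1x_2\rangle$ is identified with the standard basis vector $e_{4x_0+2x_1+x_2}$ of $\mathbb{R}^8$. $X=\begin{bmatrix}0&1\\1&0\end{bmatrix}$, $H=\frac1{\sqrt2}\begin{bmatrix}1&1\\1&-1\end{bmatrix}$. $X_0=X\otimes I\otimes I$; $CX_{0,1}$ sends $|x_0x_1x_2\rangle$ to $|x_0,x_1\oplus x_0,x_2\rangle$; $CCX_{1,2}$ sends $|x_0x_1x_2\rangle$ to $|x_0\oplus x_1x_2,x_1,x_2\rangle$; $K_{1,2}=I\otimes H\otimes H$; $CCZ$ is the diagonal matrix with $-1$ in the entry of $|111\rangle=e_7$ and $1$ elsewhere; $K_{[0,1,2,3]}$ is the matrix acting as $H\otimes H$ on $\mathrm{span}(e_0,e_1,e_2,e_3)$ and as the identity on $\mathrm{span}(e_4,\dots,e_7)$ (i.e. $K_{1,2}$ applied when qubit $0$ is in state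 $|0\rangle$). *)

theory Defs
  imports "HOL-Analysis.Analysis"
begin

text \<open>Basis index of a row/column (type 8 has elements 0..7; e_k has index k).\<close>
definition idx :: "8 \<Rightarrow> nat" where
  "idx i = nat (Rep_bit0 i)"

text \<open>Bit of qubit q (q = 0 most significant) of k = 4 x0 + 2 x1 + x2.\<close>
definition qbit :: "nat \<Rightarrow> nat \<Rightarrow> nat" where
  "qbit q k = (k div 2 ^ (2 - q)) mod 2"

definition dyadic :: "real \<Rightarrow> bool" where
  "dyadic x \<longleftrightarrow> (\<exists>a::int. \<exists>k::nat. x = of_int a / 2 ^ k)"

definition O8D :: "(real^8^8) set" where
  "O8D = {A. orthogonal_matrix A \<and> (\<forall>i j. dyadic (A $ i $ j))}"

inductive_set gen_group :: "(real^8^8) set \<Rightarrow> (real^8^8) set" for S where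
  gen_base: "A \<in> S \<Longrightarrow> A \<in> gen_group S"
| gen_one: "mat 1 \<in> gen_group S"
| gen_mult: "A \<in> gen_group S \<Longrightarrow> B \<in> gen_group S \<Longrightarrow> A ** B \<in> gen_group S"
| gen_inv: "A \<in> gen_group S \<Longrightarrow> matrix_inv A \<in> gen_group S"

definition perm_mat :: "(nat \<Rightarrow> nat) \<Rightarrow> real^8^8" where
  "perm_mat p = (\<chi> i j. if idx i = p (idx j) then 1 else 0)"

definition X0 :: "real^8^8" where
  "X0 = perm_mat (\<lambda>k. 4 * (1 - qbit 0 k) + 2 * qbit 1 k + qbit 2 k)"

definition CX01 :: "real^8^8" where
  "CX01 = perm_mat (\<lambda>k. if qbit 0 k = 1 then 4 + 2 * (1 - qbit 1 k) + qbit 2 k else k)"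

definition CCX12 :: "real^8^8" where
  "CCX12 = perm_mat (\<lambda>k. if qbit 1 k = 1 \<and> qbit 2 k = 1 then 4 * (1 - qbit 0 k) + 3 else k)"

text \<open>Entry of H \<otimes> H acting on qubits 1,2.\<close>
definition hh :: "nat \<Rightarrow> nat \<Rightarrow> real" where
  "hh r c = (-1) ^ (qbit 1 r * qbit 1 c + qbit 2 r * qbit 2 c) / 2"

definition K12 :: "real^8^8" where
  "K12 = (\<chi> i j. if qbit 0 (idx i) = qbit 0 (idx j) then hh (idx i) (idx j) else 0)"

definition K0123 :: "real^8^8" where
  "K0123 = (\<chi> i j. if idx i < 4 \<and> idx j < 4 then hh (idx i) (idx j)
                    else if idx i = idx j then 1 else 0)"

definition CCZ :: "real^8^8" where
  "CCZ = (\<chi> i j. if idx i = idx j then (if idx i = 7 then -1 else 1) else 0)"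

definition minimal_generating_set :: "(real^8^8) set \<Rightarrow> (real^8^8) set \<Rightarrow> bool" where
  "minimal_generating_set S G \<longleftrightarrow> gen_group S = G \<and> (\<forall>T. T \<subset> S \<longrightarrow> gen_group T \<noteq> G)"

end

theory Submission
  imports Defs
begin

text \<open>
  A matrix in \<open>O(8, \<int>[1/2])\<close> is reduced to the identity column by column.
  Once the columns after the \<open>j\<close>-th are unit vectors, the \<open>j\<close>-th column is \<open>x / 2\<^sup>k\<close>
  with \<open>x\<close> integral, supported on the first \<open>j + 1\<close> coordinates and \<open>\<parallel>x\<parallel>\<^sup>2 = 4\<^sup>k\<close>.
  If \<open>x\<close> is even it is halved. Otherwise, as odd squares are \<open>1\<close> modulo \<open>4\<close>, at least four
  entries are odd: transpositions move odd entries into the first four coordinates, and once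
  these are all odd a sign flip followed by \<open>K\<^bsub>[0,1,2,3]\<^esub>\<close> makes them even. Hence
  permutation matrices, sign flips and \<open>K\<^bsub>[0,1,2,3]\<^esub>\<close> generate the group, and both sets
  produce them: \<open>X\<^sub>0\<close>, \<open>CX\<^sub>0\<^sub>1\<close>, \<open>CCX\<^sub>1\<^sub>2\<close> and a transposition obtained by
  conjugating with \<open>K\<close> give all permutations, and explicit products give a sign flip and,
  from \<open>K\<^sub>1\<^sub>2\<close> and \<open>CCZ\<close>, the matrix \<open>K\<^bsub>[0,1,2,3]\<^esub>\<close>.

  Without one generator the others lie in a proper subgroup: the stabiliser of
  \<open>(2, 1, 1, 0, \<dots>, 0)\<close> (no \<open>X\<^sub>0\<close>), the centraliser of the swap of qubits 1 and 2
  (no \<open>CX\<^sub>0\<^sub>1\<close>), the matrices preserving or exchanging the two halves of qubit 0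
  (no \<open>CCX\<^sub>1\<^sub>2\<close>), the integral matrices (no \<open>K\<close>), and the stabiliser of the
  \<open>E\<^sub>8\<close> lattice (no \<open>CCZ\<close>).
\<close>

section \<open>Matrices indexed by natural numbers\<close>

definition elem8 :: "nat \<Rightarrow> 8" where
  "elem8 n = Abs_bit0 (int n)"

lemma idx_less_8 [simp]: "idx i < 8"
  using Rep_bit0[of i] unfolding idx_def by (simp add: nat_less_iff)

lemma elem8_idx [simp]: "elem8 (idx i) = i"
  using Rep_bit0[of i] unfolding idx_def elem8_def by (simp add: bit0.Rep_inverse)

lemma idx_elem8 [simp]: "n < 8 \<Longrightarrow> idx (elem8 n) = n"
  unfolding idx_def elem8_def by (simp add: bit0.Abs_inverse)

lemma idx_eq_iff: "idx i = idx j \<longleftrightarrow> i = j"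
  by (metis elem8_idx)

lemma sum_UNIV_8: "(\<Sum>k\<in>UNIV. h (idx k)) = (\<Sum>k<8. h k)"
proof (rule sum.reindex_bij_witness[where i = elem8 and j = idx])
qed auto

lemma lessThan_8: "{..<8::nat} = {0, 1, 2, 3, 4, 5, 6, 7}"
  by (auto simp: numeral_eq_Suc less_Suc_eq)

lemma all_less_8: "(\<forall>n<8. P n) \<longleftrightarrow> P 0 \<and> P 1 \<and> P 2 \<and> P 3 \<and> P 4 \<and> P 5 \<and> P 6 \<and> P (7::nat)"
  using lessThan_8 by (metis (no_types, lifting) insert_iff lessThan_iff singletonD)

lemma sum_lessThan_8: "(\<Sum>k<8. h k) = h 0 + h 1 + h 2 + h 3 + h 4 + h 5 + h 6 + h (7::nat)"
  unfolding lessThan_8 by (simp add: add.assoc)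

definition mat8 :: "(nat \<Rightarrow> nat \<Rightarrow> real) \<Rightarrow> real^8^8" where
  "mat8 f = (\<chi> i j. f (idx i) (idx j))"

definition vec8 :: "(nat \<Rightarrow> real) \<Rightarrow> real^8" where
  "vec8 u = (\<chi> i. u (idx i))"

definition fmat_mult :: "(nat \<Rightarrow> nat \<Rightarrow> real) \<Rightarrow> (nat \<Rightarrow> nat \<Rightarrow> real) \<Rightarrow> nat \<Rightarrow> nat \<Rightarrow> real" where
  "fmat_mult f g r c = (\<Sum>k<8. f r k * g k c)"

definition fmat_apply :: "(nat \<Rightarrow> nat \<Rightarrow> real) \<Rightarrow> (nat \<Rightarrow> real) \<Rightarrow> nat \<Rightarrow> real" where
  "fmat_apply f u r = (\<Sum>c<8. f r c * u c)"

lemma mat8_nth [simp]: "mat8 f $ i $ j = f (idx i) (idx j)"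
  by (simp add: mat8_def)

lemma mat8_eq_iff: "mat8 f = mat8 g \<longleftrightarrow> (\<forall>r<8. \<forall>c<8. f r c = g r c)"
  by (auto simp: mat8_def vec_eq_iff) (metis idx_elem8)

lemma mat8_eqI: "(\<And>r c. r < 8 \<Longrightarrow> c < 8 \<Longrightarrow> f r c = g r c) \<Longrightarrow> mat8 f = mat8 g"
  by (simp add: mat8_eq_iff)

lemma mat8_entries: "A = mat8 (\<lambda>r c. A $ elem8 r $ elem8 c)"
  by (simp add: mat8_def vec_eq_iff)

lemma vec8_eq_iff: "vec8 u = vec8 v \<longleftrightarrow> (\<forall>r<8. u r = v r)"
  by (auto simp: vec8_def vec_eq_iff) (metis idx_elem8)

lemma mat_1_eq_mat8: "mat 1 = mat8 (\<lambda>r c. if r = c then 1 else 0)"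
  by (simp add: mat8_def mat_def vec_eq_iff idx_eq_iff)

lemma transpose_mat8: "transpose (mat8 f) = mat8 (\<lambda>r c. f c r)"
  by (simp add: mat8_def transpose_def vec_eq_iff)

lemma mat8_mult: "mat8 f ** mat8 g = mat8 (fmat_mult f g)"
  by (simp add: matrix_matrix_mult_def mat8_def fmat_mult_def vec_eq_iff
      sum_UNIV_8[where h = "\<lambda>k. f _ k * g k _"])

lemma mat8_mult_vec8: "mat8 f *v vec8 u = vec8 (fmat_apply f u)"
  by (simp add: matrix_vector_mult_def mat8_def vec8_def fmat_apply_def vec_eq_iff
      sum_UNIV_8[where h = "\<lambda>k. f _ k * u k"])

text \<open>Explicit matrices are written as lists of rows, so that products of them are
  evaluated by the simplifier.\<close>

definition square8 :: "real list list \<Rightarrow> bool" where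
  "square8 L \<longleftrightarrow> length L = 8 \<and> (\<forall>row\<in>set L. length row = 8)"

definition lmat :: "real list list \<Rightarrow> real^8^8" where
  "lmat L = mat8 (\<lambda>r c. L ! r ! c)"

definition lvec :: "real list \<Rightarrow> real^8" where
  "lvec v = vec8 (\<lambda>r. v ! r)"

definition lmult :: "real list list \<Rightarrow> real list list \<Rightarrow> real list list" where
  "lmult A B = map (\<lambda>row. map (\<lambda>c. sum_list (map2 (*) row (map (\<lambda>b. b ! c) B))) [0..<8]) A"

definition lapply :: "real list list \<Rightarrow> real list \<Rightarrow> real list" where
  "lapply A v = map (\<lambda>row. sum_list (map2 (*) row v)) A"

lemma sum_list_map2_times:
  assumes "length u = 8" "length v = 8"
  shows "sum_list (map2 (*) u v) = (\<Sum>k<8. u ! k * v ! k :: real)"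
  using assms by (simp add: sum_list_sum_nth atLeast0LessThan)

lemma lmat_mult:
  assumes A: "square8 A" and B: "square8 B"
  shows "lmat A ** lmat B = lmat (lmult A B)"
  unfolding lmat_def mat8_mult
proof (rule mat8_eqI)
  fix r c :: nat assume rc: "r < 8" "c < 8"
  have len: "length (A ! r) = 8" "length (map (\<lambda>b. b ! c) B) = 8"
    using A B rc by (auto simp: square8_def)
  have "lmult A B ! r ! c = sum_list (map2 (*) (A ! r) (map (\<lambda>b. b ! c) B))"
    using A rc by (simp add: square8_def lmult_def)
  also have "\<dots> = (\<Sum>k<8. A ! r ! k * B ! k ! c)"
    using B by (simp add: sum_list_map2_times[OF len] square8_def)
  finally show "fmat_mult (\<lambda>r c. A ! r ! c) (\<lambda>r c. B ! r ! c) r c = lmult A B ! r ! c"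
    by (simp add: fmat_mult_def)
qed

lemma lmat_mult_lvec:
  assumes A: "square8 A" and v: "length v = 8"
  shows "lmat A *v lvec v = lvec (lapply A v)"
  unfolding lmat_def lvec_def mat8_mult_vec8 vec8_eq_iff
proof (intro allI impI)
  fix r :: nat assume r: "r < 8"
  have "length (A ! r) = 8" using A r by (auto simp: square8_def)
  then show "fmat_apply (\<lambda>r c. A ! r ! c) (\<lambda>r. v ! r) r = lapply A v ! r"
    using A v r by (simp add: square8_def lapply_def fmat_apply_def sum_list_map2_times)
qed

lemma upt_0_8: "[0..<8] = [0, 1, 2, 3, 4, 5, 6, 7::nat]"
  by (simp add: upt_rec)

definition ltranspose :: "real list list \<Rightarrow> real list list" where
  "ltranspose L = map (\<lambda>c. map (\<lambda>row. row ! c) L) [0..<8]"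

definition lid :: "real list list" where
  "lid = map (\<lambda>r. map (\<lambda>c. if r = c then 1 else 0) [0..<8]) [0..<8]"

lemmas list_matrix_eval = square8_def lmult_def lapply_def ltranspose_def lid_def upt_0_8

lemma square8_ltranspose: "square8 L \<Longrightarrow> square8 (ltranspose L)"
  by (simp add: square8_def ltranspose_def)

lemma transpose_lmat: "square8 L \<Longrightarrow> transpose (lmat L) = lmat (ltranspose L)"
  by (simp add: lmat_def transpose_mat8 mat8_eq_iff ltranspose_def square8_def)

lemma lmat_lid: "lmat lid = mat 1"
  by (simp add: lmat_def lid_def mat_1_eq_mat8 mat8_eq_iff)

lemma lmat_eq_iff: "lmat A = lmat B \<longleftrightarrow> (\<forall>r<8. \<forall>c<8. A ! r ! c = B ! r ! c)"
  by (simp add: lmat_def mat8_eq_iff)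

lemma lvec_eq_iff: "lvec u = lvec v \<longleftrightarrow> (\<forall>r<8. u ! r = v ! r)"
  by (simp add: lvec_def vec8_eq_iff)

section \<open>Matrix groups and \<open>O(8, \<int>[1/2])\<close>\<close>

definition matrix_group :: "(real^'n^'n) set \<Rightarrow> bool" where
  "matrix_group G \<longleftrightarrow> mat 1 \<in> G \<and> (\<forall>A\<in>G. \<forall>B\<in>G. A ** B \<in> G) \<and> (\<forall>A\<in>G. matrix_inv A \<in> G)"

lemma matrix_group_one: "matrix_group G \<Longrightarrow> mat 1 \<in> G"
  by (simp add: matrix_group_def)

lemma matrix_group_mult: "matrix_group G \<Longrightarrow> A \<in> G \<Longrightarrow> B \<in> G \<Longrightarrow> A ** B \<in> G"
  by (simp add: matrix_group_def)

lemma matrix_group_inv: "matrix_group G \<Longrightarrow> A \<in> G \<Longrightarrow> matrix_inv A \<in> G"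
  by (simp add: matrix_group_def)

lemma matrix_group_gen_group: "matrix_group (gen_group S)"
  by (auto simp: matrix_group_def intro: gen_group.intros)

lemma gen_group_least:
  assumes "matrix_group G" "S \<subseteq> G"
  shows "gen_group S \<subseteq> G"
proof
  fix A assume "A \<in> gen_group S"
  then show "A \<in> G"
    by induction (use assms in \<open>auto simp: matrix_group_def\<close>)
qed

lemma subset_gen_group: "S \<subseteq> gen_group S"
  by (auto intro: gen_base)

lemma matrix_inv_orthogonal:
  fixes A :: "real^'n^'n"
  assumes "orthogonal_matrix A"
  shows "matrix_inv A = transpose A"
proof -
  have "\<exists>A'. A ** A' = mat 1 \<and> A' ** A = mat 1"
    using assms by (auto simp: orthogonal_matrix_def)
  then have inv: "matrix_inv A ** A = mat 1"
    unfolding matrix_inv_def by (rule someI2_ex) blast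
  have "matrix_inv A = matrix_inv A ** (A ** transpose A)"
    using assms by (simp add: orthogonal_matrix_def)
  also have "\<dots> = transpose A"
    by (simp add: matrix_mul_assoc inv)
  finally show ?thesis .
qed

lemma matrix_group_orthogonalI:
  fixes G :: "(real^'n^'n) set"
  assumes "\<And>A. A \<in> G \<Longrightarrow> orthogonal_matrix A"
    and "mat 1 \<in> G"
    and "\<And>A B. A \<in> G \<Longrightarrow> B \<in> G \<Longrightarrow> A ** B \<in> G"
    and "\<And>A. A \<in> G \<Longrightarrow> transpose A \<in> G"
  shows "matrix_group G"
  using assms by (simp add: matrix_group_def matrix_inv_orthogonal)

lemma dyadic_of_int [simp]: "dyadic (of_int a)"
  unfolding dyadic_def by (rule exI[of _ a], rule exI[of _ 0]) simp

lemma dyadic_0 [simp]: "dyadic 0"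
  using dyadic_of_int[of 0] by simp

lemma dyadic_1 [simp]: "dyadic 1"
  using dyadic_of_int[of 1] by simp

lemma dyadic_half [simp]: "dyadic x \<Longrightarrow> dyadic (x / 2)"
  unfolding dyadic_def by (metis divide_divide_eq_left power_Suc2)

lemma dyadic_minus [simp]: "dyadic x \<Longrightarrow> dyadic (- x)"
  unfolding dyadic_def by (metis minus_divide_left of_int_minus)

lemma dyadic_add:
  assumes "dyadic x" "dyadic y"
  shows "dyadic (x + y)"
proof -
  obtain a k b l where x: "x = of_int a / 2 ^ k" and y: "y = of_int b / 2 ^ l"
    using assms unfolding dyadic_def by blast
  have "x + y = of_int (a * 2 ^ l + b * 2 ^ k) / 2 ^ (k + l)"
    unfolding x y by (simp add: field_simps power_add)
  then show ?thesis unfolding dyadic_def by blast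
qed

lemma dyadic_mult:
  assumes "dyadic x" "dyadic y"
  shows "dyadic (x * y)"
proof -
  obtain a k b l where "x = of_int a / 2 ^ k" "y = of_int b / 2 ^ l"
    using assms unfolding dyadic_def by blast
  then have "x * y = of_int (a * b) / 2 ^ (k + l)"
    by (simp add: power_add)
  then show ?thesis unfolding dyadic_def by blast
qed

lemma dyadic_sum: "(\<And>x. x \<in> A \<Longrightarrow> dyadic (f x)) \<Longrightarrow> dyadic (sum f A)"
  by (induction A rule: infinite_finite_induct) (auto intro: dyadic_add)

lemma matrix_group_O8D: "matrix_group O8D"
proof (rule matrix_group_orthogonalI)
  show "mat 1 \<in> O8D"
    using orthogonal_matrix_id by (simp add: O8D_def mat_def)
  show "A ** B \<in> O8D" if "A \<in> O8D" "B \<in> O8D" for A B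
    using that unfolding O8D_def matrix_matrix_mult_def
    by (auto intro!: orthogonal_matrix_mul[unfolded matrix_matrix_mult_def] dyadic_sum dyadic_mult)
  show "transpose A \<in> O8D" if "A \<in> O8D" for A
  proof -
    have "transpose A $ i $ j = A $ j $ i" for i j
      by (simp add: transpose_def)
    then show ?thesis
      using that by (simp add: O8D_def)
  qed
qed (simp add: O8D_def)

lemma O8D_mult: "A \<in> O8D \<Longrightarrow> B \<in> O8D \<Longrightarrow> A ** B \<in> O8D"
  using matrix_group_O8D by (rule matrix_group_mult)

section \<open>The gates as explicit matrices\<close>

lemma lmat_in_O8D:
  assumes "square8 L" "lmult (ltranspose L) L = lid" "\<forall>row\<in>set L. \<forall>x\<in>set row. dyadic x"
  shows "lmat L \<in> O8D"
proof -
  have "transpose (lmat L) ** lmat L = mat 1"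
    using assms(1,2) by (simp add: transpose_lmat lmat_mult square8_ltranspose lmat_lid)
  moreover have "dyadic (L ! r ! c)" if "r < 8" "c < 8" for r c
  proof -
    have "L ! r \<in> set L" "length (L ! r) = 8"
      using assms(1) that by (auto simp: square8_def)
    then show ?thesis
      using assms(3) that by (metis nth_mem)
  qed
  ultimately show ?thesis
    by (simp add: O8D_def orthogonal_matrix lmat_def)
qed

lemma perm_mat_eq_mat8: "perm_mat p = mat8 (\<lambda>r c. if r = p c then 1 else 0)"
  by (simp add: perm_mat_def mat8_def)

lemma X0_eq_lmat: "X0 = lmat
  [[0, 0, 0, 0, 1, 0, 0, 0],
   [0, 0, 0, 0, 0, 1, 0, 0],
   [0, 0, 0, 0, 0, 0, 1, 0],
   [0, 0, 0, 0, 0, 0, 0, 1],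
   [1, 0, 0, 0, 0, 0, 0, 0],
   [0, 1, 0, 0, 0, 0, 0, 0],
   [0, 0, 1, 0, 0, 0, 0, 0],
   [0, 0, 0, 1, 0, 0, 0, 0]]"
  by (simp add: X0_def perm_mat_eq_mat8 lmat_def mat8_eq_iff all_less_8 qbit_def)

lemma CX01_eq_lmat: "CX01 = lmat
  [[1, 0, 0, 0, 0, 0, 0, 0],
   [0, 1, 0, 0, 0, 0, 0, 0],
   [0, 0, 1, 0, 0, 0, 0, 0],
   [0, 0, 0, 1, 0, 0, 0, 0],
   [0, 0, 0, 0, 0, 0, 1, 0],
   [0, 0, 0, 0, 0, 0, 0, 1],
   [0, 0, 0, 0, 1, 0, 0, 0],
   [0, 0, 0, 0, 0, 1, 0, 0]]"
  by (simp add: CX01_def perm_mat_eq_mat8 lmat_def mat8_eq_iff all_less_8 qbit_def)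

lemma CCX12_eq_lmat: "CCX12 = lmat
  [[1, 0, 0, 0, 0, 0, 0, 0],
   [0, 1, 0, 0, 0, 0, 0, 0],
   [0, 0, 1, 0, 0, 0, 0, 0],
   [0, 0, 0, 0, 0, 0, 0, 1],
   [0, 0, 0, 0, 1, 0, 0, 0],
   [0, 0, 0, 0, 0, 1, 0, 0],
   [0, 0, 0, 0, 0, 0, 1, 0],
   [0, 0, 0, 1, 0, 0, 0, 0]]"
  by (simp add: CCX12_def perm_mat_eq_mat8 lmat_def mat8_eq_iff all_less_8 qbit_def)

lemma K0123_eq_lmat: "K0123 = lmat
  [[1/2,  1/2,  1/2,  1/2, 0, 0, 0, 0],
   [1/2, -1/2,  1/2, -1/2, 0, 0, 0, 0],
   [1/2,  1/2, -1/2, -1/2, 0, 0, 0, 0],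
   [1/2, -1/2, -1/2,  1/2, 0, 0, 0, 0],
   [0, 0, 0, 0, 1, 0, 0, 0],
   [0, 0, 0, 0, 0, 1, 0, 0],
   [0, 0, 0, 0, 0, 0, 1, 0],
   [0, 0, 0, 0, 0, 0, 0, 1]]"
proof -
  have eq: "K0123 = mat8 (\<lambda>r c. if r < 4 \<and> c < 4 then hh r c else if r = c then 1 else 0)"
    by (simp add: K0123_def mat8_def)
  show ?thesis
    unfolding eq
    by (simp add: lmat_def mat8_eq_iff all_less_8 hh_def qbit_def)
qed

lemma K12_eq_lmat: "K12 = lmat
  [[1/2,  1/2,  1/2,  1/2, 0, 0, 0, 0],
   [1/2, -1/2,  1/2, -1/2, 0, 0, 0, 0],
   [1/2,  1/2, -1/2, -1/2, 0, 0, 0, 0],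
   [1/2, -1/2, -1/2,  1/2, 0, 0, 0, 0],
   [0, 0, 0, 0, 1/2,  1/2,  1/2,  1/2],
   [0, 0, 0, 0, 1/2, -1/2,  1/2, -1/2],
   [0, 0, 0, 0, 1/2,  1/2, -1/2, -1/2],
   [0, 0, 0, 0, 1/2, -1/2, -1/2,  1/2]]"
proof -
  have eq: "K12 = mat8 (\<lambda>r c. if qbit 0 r = qbit 0 c then hh r c else 0)"
    by (simp add: K12_def mat8_def)
  show ?thesis
    unfolding eq
    by (simp add: lmat_def mat8_eq_iff all_less_8 hh_def qbit_def)
qed

lemma CCZ_eq_lmat: "CCZ = lmat
  [[1, 0, 0, 0, 0, 0, 0, 0],
   [0, 1, 0, 0, 0, 0, 0, 0],
   [0, 0, 1, 0, 0, 0, 0, 0],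
   [0, 0, 0, 1, 0, 0, 0, 0],
   [0, 0, 0, 0, 1, 0, 0, 0],
   [0, 0, 0, 0, 0, 1, 0, 0],
   [0, 0, 0, 0, 0, 0, 1, 0],
   [0, 0, 0, 0, 0, 0, 0, -1]]"
proof -
  have eq: "CCZ = mat8 (\<lambda>r c. if r = c then if r = 7 then -1 else 1 else 0)"
    by (simp add: CCZ_def mat8_def)
  show ?thesis
    unfolding eq
    by (simp add: lmat_def mat8_eq_iff all_less_8)
qed

lemmas gates_eq_lmat = X0_eq_lmat CX01_eq_lmat CCX12_eq_lmat K0123_eq_lmat K12_eq_lmat CCZ_eq_lmat

lemma gates_in_O8D: "X0 \<in> O8D" "CX01 \<in> O8D" "CCX12 \<in> O8D" "K0123 \<in> O8D" "K12 \<in> O8D" "CCZ \<in> O8D"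
  unfolding gates_eq_lmat
  by (rule lmat_in_O8D; simp add: list_matrix_eval)+

lemma gates_orthogonal: "orthogonal_matrix X0" "orthogonal_matrix CX01" "orthogonal_matrix CCX12"
  "orthogonal_matrix K0123" "orthogonal_matrix K12" "orthogonal_matrix CCZ"
  using gates_in_O8D by (simp_all add: O8D_def)

section \<open>Permutation matrices and sign flips\<close>

definition perm_list :: "nat list \<Rightarrow> real^8^8" where
  "perm_list P = perm_mat (\<lambda>c. P ! c)"

definition index_list8 :: "nat list \<Rightarrow> bool" where
  "index_list8 P \<longleftrightarrow> length P = 8 \<and> (\<forall>i\<in>set P. i < 8)"

definition perm_word :: "nat list list \<Rightarrow> nat list" where
  "perm_word Ps = foldr (\<lambda>P Q. map ((!) P) Q) Ps [0..<8]"

definition swap_mat :: "nat \<Rightarrow> nat \<Rightarrow> real^8^8" where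
  "swap_mat a b = perm_mat (Transposition.transpose a b)"

lemma perm_mat_cong: "\<forall>c<8. p c = q c \<Longrightarrow> perm_mat p = perm_mat q"
  by (simp add: perm_mat_eq_mat8 mat8_eq_iff)

lemma perm_mat_id: "perm_mat id = mat 1"
  by (simp add: perm_mat_eq_mat8 mat_1_eq_mat8)

lemma perm_mat_mult:
  assumes "\<And>c. c < 8 \<Longrightarrow> q c < 8"
  shows "perm_mat p ** perm_mat q = perm_mat (p \<circ> q)"
  unfolding perm_mat_eq_mat8 mat8_mult
proof (rule mat8_eqI)
  fix r c :: nat assume "c < 8"
  then have "fmat_mult (\<lambda>r c. if r = p c then 1 else 0) (\<lambda>r c. if r = q c then 1 else 0) r c
      = (\<Sum>k<8. if k = q c then (if r = p k then 1 else 0) else 0)"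
    unfolding fmat_mult_def by (intro sum.cong) auto
  also have "\<dots> = (if r = (p \<circ> q) c then 1 else 0)"
    using assms \<open>c < 8\<close> by simp
  finally show "fmat_mult (\<lambda>r c. if r = p c then 1 else 0) (\<lambda>r c. if r = q c then 1 else 0) r c
      = (if r = (p \<circ> q) c then 1 else 0)" .
qed

lemma perm_list_mult:
  "index_list8 Q \<Longrightarrow> perm_list P ** perm_list Q = perm_list (map ((!) P) Q)"
  unfolding perm_list_def index_list8_def
  by (subst perm_mat_mult) (auto intro: perm_mat_cong)

lemma perm_word_in_group:
  assumes G: "matrix_group G" and Ps: "\<And>P. P \<in> set Ps \<Longrightarrow> index_list8 P \<and> perm_list P \<in> G"
  shows "index_list8 (perm_word Ps) \<and> perm_list (perm_word Ps) \<in> G"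
  using Ps
proof (induction Ps)
  case Nil
  have "perm_list [0..<8] = mat 1"
    unfolding perm_list_def perm_mat_id[symmetric] by (rule perm_mat_cong) simp
  then show ?case
    using matrix_group_one[OF G] by (simp add: perm_word_def index_list8_def)
next
  case (Cons P Ps)
  then have W: "index_list8 (perm_word Ps)" "perm_list (perm_word Ps) \<in> G"
    and P: "index_list8 P" "perm_list P \<in> G" by auto
  have word: "perm_word (P # Ps) = map ((!) P) (perm_word Ps)"
    by (simp add: perm_word_def)
  have "index_list8 (perm_word (P # Ps))"
    using W(1) P(1) unfolding word index_list8_def by auto
  moreover have "perm_list (perm_word (P # Ps)) \<in> G"
    unfolding word perm_list_mult[OF W(1), symmetric] by (rule matrix_group_mult[OF G P(2) W(2)])
  ultimately show ?case ..
qed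

definition x0_perm :: "nat list" where "x0_perm = [4, 5, 6, 7, 0, 1, 2, 3]"
definition cx_perm :: "nat list" where "cx_perm = [0, 1, 2, 3, 6, 7, 4, 5]"
definition ccx_perm :: "nat list" where "ccx_perm = [0, 1, 2, 7, 4, 5, 6, 3]"
definition swap67_perm :: "nat list" where "swap67_perm = [0, 1, 2, 3, 4, 5, 7, 6]"

lemmas gate_perms = x0_perm_def cx_perm_def ccx_perm_def swap67_perm_def

lemma X0_eq_perm_list: "X0 = perm_list x0_perm"
  unfolding X0_def perm_list_def by (rule perm_mat_cong) (simp add: all_less_8 x0_perm_def qbit_def)

lemma CX01_eq_perm_list: "CX01 = perm_list cx_perm"
  unfolding CX01_def perm_list_def by (rule perm_mat_cong) (simp add: all_less_8 cx_perm_def qbit_def)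

lemma CCX12_eq_perm_list: "CCX12 = perm_list ccx_perm"
  unfolding CCX12_def perm_list_def by (rule perm_mat_cong) (simp add: all_less_8 ccx_perm_def qbit_def)

lemma perm_list_eq_lmat:
  "perm_list P = lmat (map (\<lambda>r. map (\<lambda>c. if r = P ! c then 1 else 0) [0..<8]) [0..<8])"
  by (simp add: perm_list_def perm_mat_eq_mat8 lmat_def mat8_eq_iff)

lemma swap67_eq_K12_conj:
  "perm_list swap67_perm
     = K12 ** perm_list (perm_word [ccx_perm, cx_perm, ccx_perm, cx_perm, ccx_perm]) ** K12"
  by (simp add: perm_word_def gate_perms upt_0_8 perm_list_eq_lmat K12_eq_lmat lmat_mult list_matrix_eval)

lemma swap67_eq_K0123_conj:
  "perm_list swap67_perm = X0 ** K0123
     ** perm_list (perm_word [ccx_perm, x0_perm, cx_perm, ccx_perm, cx_perm, ccx_perm, x0_perm])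
     ** K0123 ** X0"
  by (simp add: perm_word_def gate_perms upt_0_8 perm_list_eq_lmat X0_eq_lmat K0123_eq_lmat lmat_mult
      list_matrix_eval)

lemma gate_perm_words_in_group:
  assumes G: "matrix_group G" and gens: "X0 \<in> G" "CX01 \<in> G" "CCX12 \<in> G"
    and S: "\<And>P. P \<in> S \<Longrightarrow> index_list8 P \<and> perm_list P \<in> G"
    and Ps: "set Ps \<subseteq> {x0_perm, cx_perm, ccx_perm} \<union> S"
  shows "perm_list (perm_word Ps) \<in> G"
proof -
  have "index_list8 P \<and> perm_list P \<in> G" if "P \<in> set Ps" for P
  proof -
    have "P \<in> {x0_perm, cx_perm, ccx_perm} \<union> S"
      using that Ps by blast
    then show ?thesis
      using gens S unfolding X0_eq_perm_list CX01_eq_perm_list CCX12_eq_perm_list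
      by (auto simp: gate_perms index_list8_def)
  qed
  then show ?thesis
    using perm_word_in_group[OF G] by blast
qed

lemma swap_mat_0_in_group:
  assumes G: "matrix_group G"
    and gens: "X0 \<in> G" "CX01 \<in> G" "CCX12 \<in> G" "perm_list swap67_perm \<in> G"
    and "n < 8"
  shows "swap_mat 0 n \<in> G"
proof -
  have "index_list8 swap67_perm"
    by (simp add: index_list8_def swap67_perm_def)
  have word: "perm_list (perm_word Ps) \<in> G" if "set Ps \<subseteq> {x0_perm, cx_perm, ccx_perm, swap67_perm}" for Ps
  proof -
    have Ps: "set Ps \<subseteq> {x0_perm, cx_perm, ccx_perm} \<union> {swap67_perm}"
      using that by auto
    show ?thesis
      by (rule gate_perm_words_in_group[OF G gens(1-3) _ Ps]) (use gens(4) \<open>index_list8 swap67_perm\<close> in auto)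
  qed
  have "swap_mat 0 1 = perm_list (perm_word [x0_perm, cx_perm, swap67_perm, cx_perm, x0_perm])"
    "swap_mat 0 2 = perm_list (perm_word [ccx_perm, x0_perm, cx_perm, ccx_perm, cx_perm, ccx_perm, cx_perm,
      x0_perm])"
    "swap_mat 0 3 = perm_list (perm_word [ccx_perm, x0_perm, cx_perm, ccx_perm, swap67_perm, ccx_perm,
      cx_perm, ccx_perm, x0_perm])"
    "swap_mat 0 4 = perm_list (perm_word [cx_perm, swap67_perm, x0_perm, cx_perm, ccx_perm, swap67_perm,
      ccx_perm, cx_perm, x0_perm, swap67_perm, cx_perm])"
    "swap_mat 0 5 = perm_list (perm_word [cx_perm, x0_perm, cx_perm, ccx_perm, swap67_perm, ccx_perm, cx_perm,
      x0_perm, cx_perm])"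
    "swap_mat 0 6 = perm_list (perm_word [swap67_perm, x0_perm, cx_perm, ccx_perm, swap67_perm, ccx_perm,
      cx_perm, x0_perm, swap67_perm])"
    "swap_mat 0 7 = perm_list (perm_word [x0_perm, cx_perm, ccx_perm, swap67_perm, ccx_perm, cx_perm,
      x0_perm])"
    unfolding swap_mat_def perm_list_def
    by (rule perm_mat_cong;
        simp add: all_less_8 perm_word_def gate_perms upt_0_8 Transposition.transpose_def)+
  moreover have "swap_mat 0 0 = mat 1"
    by (simp add: swap_mat_def perm_mat_id)
  ultimately have "\<forall>n<8. swap_mat 0 n \<in> G"
    unfolding all_less_8 using word matrix_group_one[OF G] by simp
  then show ?thesis
    using \<open>n < 8\<close> by blast
qed

lemma swap_mat_in_group:
  assumes G: "matrix_group G" and swap0: "\<And>n. n < 8 \<Longrightarrow> swap_mat 0 n \<in> G"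
    and "a < 8" "b < 8"
  shows "swap_mat a b \<in> G"
proof -
  have swap_sym: "swap_mat a b = swap_mat b a"
    by (simp add: swap_mat_def transpose_commute)
  consider "a = b" | "a = 0" | "b = 0" | "a \<noteq> b" "a \<noteq> 0" "b \<noteq> 0"
    by blast
  then show ?thesis
  proof cases
    case 1
    then show ?thesis
      using matrix_group_one[OF G] by (simp add: swap_mat_def perm_mat_id)
  next
    case 2
    then show ?thesis
      using swap0 \<open>b < 8\<close> by simp
  next
    case 3
    then show ?thesis
      using swap0 \<open>a < 8\<close> swap_sym by simp
  next
    case 4
    have "swap_mat 0 a ** swap_mat 0 b ** swap_mat 0 a
        = perm_mat (Transposition.transpose a 0 \<circ> Transposition.transpose 0 b \<circ> Transposition.transpose a 0)"
      using \<open>a < 8\<close> \<open>b < 8\<close> unfolding swap_mat_def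
      by (simp add: perm_mat_mult transpose_commute[of 0 a] Transposition.transpose_def comp_assoc)
    also have "\<dots> = swap_mat a b"
      using 4 by (simp add: swap_mat_def transpose_comp_triple)
    finally show ?thesis
      using swap0 \<open>a < 8\<close> \<open>b < 8\<close> matrix_group_mult[OF G] by metis
  qed
qed

lemma perm_mat_in_group:
  assumes G: "matrix_group G" and swaps: "\<And>a b. a < 8 \<Longrightarrow> b < 8 \<Longrightarrow> swap_mat a b \<in> G"
    and p: "p permutes {..<8}"
  shows "perm_mat p \<in> G"
  using p finite_lessThan
proof (induction rule: permutes_induct)
  case id
  then show ?case
    using matrix_group_one[OF G] perm_mat_id by (simp add: id_def)
next
  case (swap a b p)
  have "perm_mat (Transposition.transpose a b \<circ> p) = swap_mat a b ** perm_mat p"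
    unfolding swap_mat_def using permutes_in_image[OF swap.hyps(4)] by (simp add: perm_mat_mult)
  moreover have "swap_mat a b \<in> G"
    using swap.hyps(1,2) swaps by simp
  ultimately show ?case
    using swap.IH matrix_group_mult[OF G] by metis
qed

lemma perm_list_in_group:
  assumes G: "matrix_group G" and swaps: "\<And>a b. a < 8 \<Longrightarrow> b < 8 \<Longrightarrow> swap_mat a b \<in> G"
    and P: "distinct P" "index_list8 P"
  shows "perm_list P \<in> G"
proof -
  define p where "p c = (if c < 8 then P ! c else c)" for c
  have "inj_on p {..<8}"
    using P by (auto simp: inj_on_def p_def nth_eq_iff_index_eq index_list8_def)
  moreover have "p ` {..<8} \<subseteq> {..<8}"
    using P by (auto simp: p_def index_list8_def)
  ultimately have "bij_betw p {..<8} {..<8}"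
    by (simp add: bij_betw_def endo_inj_surj)
  then have "p permutes {..<8}"
    by (rule bij_imp_permutes) (simp add: p_def)
  moreover have "perm_list P = perm_mat p"
    unfolding perm_list_def by (rule perm_mat_cong) (simp add: p_def)
  ultimately show ?thesis
    using perm_mat_in_group[OF G swaps] by simp
qed

definition sign_flip :: "nat \<Rightarrow> real^8^8" where
  "sign_flip a = mat8 (\<lambda>r c. if r = c then if r = a then -1 else 1 else 0)"

lemma sign_flip_eq_lmat:
  "sign_flip a = lmat (map (\<lambda>r. map (\<lambda>c. if r = c then if r = a then -1 else 1 else 0) [0..<8]) [0..<8])"
  by (auto simp: sign_flip_def lmat_def mat8_eq_iff)

lemma swap_mat_eq_mat8: "swap_mat a b = mat8 (\<lambda>r c. if r = Transposition.transpose a b c then 1 else 0)"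
  by (simp add: swap_mat_def perm_mat_eq_mat8)

lemma swap_mat_mult_left:
  assumes "a < 8" "b < 8"
  shows "swap_mat a b ** mat8 f = mat8 (\<lambda>r c. f (Transposition.transpose a b r) c)"
  unfolding swap_mat_eq_mat8 mat8_mult
proof (rule mat8_eqI)
  fix r c :: nat assume "r < 8"
  then have "Transposition.transpose a b r < 8"
    using assms by (simp add: Transposition.transpose_def)
  moreover have "fmat_mult (\<lambda>r c. if r = Transposition.transpose a b c then 1 else 0) f r c
      = (\<Sum>k<8. if k = Transposition.transpose a b r then f k c else 0)"
    unfolding fmat_mult_def by (intro sum.cong) (auto simp: transpose_eq_iff)
  ultimately show "fmat_mult (\<lambda>r c. if r = Transposition.transpose a b c then 1 else 0) f r c
      = f (Transposition.transpose a b r) c"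
    by simp
qed

lemma swap_mat_mult_right:
  assumes "a < 8" "b < 8"
  shows "mat8 f ** swap_mat a b = mat8 (\<lambda>r c. f r (Transposition.transpose a b c))"
  unfolding swap_mat_eq_mat8 mat8_mult
proof (rule mat8_eqI)
  fix r c :: nat assume "c < 8"
  then have "Transposition.transpose a b c < 8"
    using assms by (simp add: Transposition.transpose_def)
  moreover have "fmat_mult f (\<lambda>r c. if r = Transposition.transpose a b c then 1 else 0) r c
      = (\<Sum>k<8. if k = Transposition.transpose a b c then f r k else 0)"
    unfolding fmat_mult_def by (intro sum.cong) auto
  ultimately show "fmat_mult f (\<lambda>r c. if r = Transposition.transpose a b c then 1 else 0) r c
      = f r (Transposition.transpose a b c)"
    by simp
qed

lemma sign_flip_swap_conj: "a < 8 \<Longrightarrow> b < 8 \<Longrightarrow> swap_mat a b ** sign_flip a ** swap_mat a b = sign_flip b"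
  unfolding sign_flip_def swap_mat_mult_left swap_mat_mult_right
  by (rule mat8_eqI) (auto simp: transpose_eq_iff)

lemma sign_flip_in_group:
  assumes G: "matrix_group G" and swaps: "\<And>a b. a < 8 \<Longrightarrow> b < 8 \<Longrightarrow> swap_mat a b \<in> G"
    and "sign_flip a \<in> G" "a < 8" "b < 8"
  shows "sign_flip b \<in> G"
  using assms sign_flip_swap_conj[of a b] matrix_group_mult[OF G] by metis

lemma sign_flip_from_K0123:
  "sign_flip 2 = K0123 ** perm_list [0, 3, 4, 5, 1, 2, 6, 7] ** K0123 ** perm_list [5, 4, 1, 3, 0, 2, 6, 7]
     ** K0123 ** perm_list [4, 1, 5, 3, 0, 2, 6, 7] ** K0123 ** perm_list [0, 1, 4, 5, 2, 3, 6, 7]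
     ** K0123 ** perm_list [0, 1, 3, 2, 4, 5, 6, 7]"
  by (simp add: sign_flip_eq_lmat perm_list_eq_lmat K0123_eq_lmat lmat_mult list_matrix_eval)

lemma K0123_from_K12:
  "K0123 = sign_flip 1 ** K12 ** sign_flip 1 ** K12 ** perm_list [3, 1, 2, 0, 4, 5, 6, 7] ** sign_flip 2"
  by (simp add: sign_flip_eq_lmat perm_list_eq_lmat K0123_eq_lmat K12_eq_lmat lmat_mult list_matrix_eval)

lemma CCZ_eq_sign_flip: "CCZ = sign_flip 7"
  by (simp add: CCZ_eq_lmat sign_flip_eq_lmat list_matrix_eval)

section \<open>Column reduction\<close>

definition ivec8 :: "(nat \<Rightarrow> int) \<Rightarrow> real^8" where
  "ivec8 x = vec8 (\<lambda>r. of_int (x r))"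

definition unit_columns_from :: "nat \<Rightarrow> real^8^8 \<Rightarrow> bool" where
  "unit_columns_from n M \<longleftrightarrow> (\<forall>r<8. \<forall>c<8. n \<le> c \<longrightarrow> M $ elem8 r $ elem8 c = (if r = c then 1 else 0))"

definition column_reducible :: "(real^8^8) set \<Rightarrow> nat \<Rightarrow> (nat \<Rightarrow> int) \<Rightarrow> nat \<Rightarrow> bool" where
  "column_reducible G j x k \<longleftrightarrow>
     (\<exists>M\<in>G. unit_columns_from (Suc j) M \<and> M *v ivec8 x = ivec8 (\<lambda>r. if r = j then 2 ^ k else 0))"

lemma ivec8_eq_iff: "ivec8 x = ivec8 y \<longleftrightarrow> (\<forall>r<8. x r = y r)"
  by (simp add: ivec8_def vec8_eq_iff)

lemma matrix_mult_nth8: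
  "(A ** B) $ elem8 r $ elem8 c = (\<Sum>k<8. A $ elem8 r $ elem8 k * B $ elem8 k $ elem8 c)"
  using sum_UNIV_8[of "\<lambda>k. A $ elem8 r $ elem8 k * B $ elem8 k $ elem8 c"]
  by (simp add: matrix_matrix_mult_def)

lemma unit_columns_from_mult:
  assumes "unit_columns_from n A" "unit_columns_from n B"
  shows "unit_columns_from n (A ** B)"
  unfolding unit_columns_from_def
proof (intro allI impI)
  fix r c :: nat assume rc: "r < 8" "c < 8" "n \<le> c"
  have "(A ** B) $ elem8 r $ elem8 c = (\<Sum>k<8. if k = c then A $ elem8 r $ elem8 k else 0)"
    unfolding matrix_mult_nth8 using assms(2) rc by (intro sum.cong) (auto simp: unit_columns_from_def)
  also have "\<dots> = (if r = c then 1 else 0)"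
    using assms(1) rc by (simp add: unit_columns_from_def)
  finally show "(A ** B) $ elem8 r $ elem8 c = (if r = c then 1 else 0)" .
qed

lemma unit_columns_from_mat8:
  "unit_columns_from n (mat8 f) \<longleftrightarrow> (\<forall>r<8. \<forall>c<8. n \<le> c \<longrightarrow> f r c = (if r = c then 1 else 0))"
  by (simp add: unit_columns_from_def)

lemma column_reducible_mult:
  assumes G: "matrix_group G" and N: "N \<in> G" "unit_columns_from (Suc j) N" "N *v ivec8 x = ivec8 y"
    and y: "column_reducible G j y k"
  shows "column_reducible G j x k"
proof -
  obtain M where M: "M \<in> G" "unit_columns_from (Suc j) M"
    "M *v ivec8 y = ivec8 (\<lambda>r. if r = j then 2 ^ k else 0)"
    using y unfolding column_reducible_def by blast
  have "(M ** N) *v ivec8 x = ivec8 (\<lambda>r. if r = j then 2 ^ k else 0)"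
    using M(3) N(3) by (simp add: matrix_vector_mul_assoc[symmetric])
  then show ?thesis
    unfolding column_reducible_def
    using matrix_group_mult[OF G M(1) N(1)] unit_columns_from_mult[OF M(2) N(2)] by blast
qed

lemma swap_mat_mult_ivec8:
  assumes "a < 8" "b < 8"
  shows "swap_mat a b *v ivec8 x = ivec8 (\<lambda>r. x (Transposition.transpose a b r))"
  unfolding ivec8_def swap_mat_eq_mat8 mat8_mult_vec8 vec8_eq_iff
proof (intro allI impI)
  fix r :: nat assume "r < 8"
  then have "Transposition.transpose a b r < 8"
    using assms by (simp add: Transposition.transpose_def)
  moreover have "fmat_apply (\<lambda>r c. if r = Transposition.transpose a b c then 1 else 0) (\<lambda>r. of_int (x r)) r
      = (\<Sum>c<8. if c = Transposition.transpose a b r then of_int (x c) else 0)"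
    unfolding fmat_apply_def by (intro sum.cong) (auto simp: transpose_eq_iff)
  ultimately show "fmat_apply (\<lambda>r c. if r = Transposition.transpose a b c then 1 else 0) (\<lambda>r. of_int (x r)) r
      = of_int (x (Transposition.transpose a b r))"
    by simp
qed

lemma sign_flip_mult_ivec8: "sign_flip a *v ivec8 x = ivec8 (x(a := - x a))"
  unfolding ivec8_def sign_flip_def mat8_mult_vec8 vec8_eq_iff
proof (intro allI impI)
  fix r :: nat assume "r < 8"
  have "fmat_apply (\<lambda>r c. if r = c then if r = a then -1 else 1 else 0) (\<lambda>r. of_int (x r)) r
      = (\<Sum>c<8. if c = r then (if r = a then - of_int (x r) else of_int (x r)) else 0)"
    unfolding fmat_apply_def by (intro sum.cong) auto
  with \<open>r < 8\<close> show "fmat_apply (\<lambda>r c. if r = c then if r = a then -1 else 1 else 0) (\<lambda>r. of_int (x r)) r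
      = of_int ((x(a := - x a)) r)"
    by simp
qed

lemma K0123_mult_ivec8:
  "K0123 *v ivec8 x = vec8 (\<lambda>r.
     if r = 0 then of_int (x 0 + x 1 + x 2 + x 3) / 2
     else if r = 1 then of_int (x 0 - x 1 + x 2 - x 3) / 2
     else if r = 2 then of_int (x 0 + x 1 - x 2 - x 3) / 2
     else if r = 3 then of_int (x 0 - x 1 - x 2 + x 3) / 2
     else of_int (x r))"
  unfolding K0123_eq_lmat ivec8_def lmat_def mat8_mult_vec8 vec8_eq_iff all_less_8
  by (simp add: fmat_apply_def sum_lessThan_8 field_simps)

lemma unit_columns_from_swap_mat: "a < n \<Longrightarrow> b < n \<Longrightarrow> unit_columns_from n (swap_mat a b)"
  by (auto simp: swap_mat_eq_mat8 unit_columns_from_mat8 transpose_eq_iff)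

lemma unit_columns_from_sign_flip: "a < n \<Longrightarrow> unit_columns_from n (sign_flip a)"
  by (auto simp: sign_flip_def unit_columns_from_mat8)

lemma unit_columns_from_K0123: "4 \<le> n \<Longrightarrow> unit_columns_from n K0123"
  unfolding K0123_eq_lmat lmat_def unit_columns_from_mat8 all_less_8 by auto

definition has_elementary_gates :: "(real^8^8) set \<Rightarrow> bool" where
  "has_elementary_gates G \<longleftrightarrow>
     (\<forall>a<8. \<forall>b<8. swap_mat a b \<in> G) \<and> (\<forall>a<8. sign_flip a \<in> G) \<and> K0123 \<in> G"

definition supported_upto :: "nat \<Rightarrow> (nat \<Rightarrow> int) \<Rightarrow> bool" where
  "supported_upto j x \<longleftrightarrow> (\<forall>r<8. j < r \<longrightarrow> x r = 0)"

definition sq_norm8 :: "(nat \<Rightarrow> int) \<Rightarrow> int" where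
  "sq_norm8 x = (\<Sum>r<8. (x r)\<^sup>2)"

lemma column_reducible_cong:
  "(\<And>r. r < 8 \<Longrightarrow> x r = y r) \<Longrightarrow> column_reducible G j x k \<longleftrightarrow> column_reducible G j y k"
  unfolding column_reducible_def using ivec8_eq_iff[of x y] by simp

lemma column_reducible_double:
  assumes "column_reducible G j y k" "\<And>r. r < 8 \<Longrightarrow> x r = 2 * y r"
  shows "column_reducible G j x (Suc k)"
proof -
  obtain M where M: "M \<in> G" "unit_columns_from (Suc j) M"
    "M *v ivec8 y = ivec8 (\<lambda>r. if r = j then 2 ^ k else 0)"
    using assms(1) unfolding column_reducible_def by blast
  have "ivec8 x = 2 *\<^sub>R ivec8 y"
    using assms(2) by (simp add: ivec8_def vec8_def vec_eq_iff)
  then have "M *v ivec8 x = 2 *\<^sub>R ivec8 (\<lambda>r. if r = j then 2 ^ k else 0)"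
    using M(3) by (simp add: matrix_vector_mult_scaleR)
  also have "\<dots> = ivec8 (\<lambda>r. if r = j then 2 ^ Suc k else 0)"
    by (simp add: ivec8_def vec8_def vec_eq_iff)
  finally show ?thesis
    unfolding column_reducible_def using M(1,2) by blast
qed

lemma sq_norm8_eq_1:
  assumes "sq_norm8 x = 1"
  obtains m where "m < 8" "x m = 1 \<or> x m = -1" "\<And>r. r < 8 \<Longrightarrow> r \<noteq> m \<Longrightarrow> x r = 0"
proof -
  obtain m where m: "m < 8" "x m \<noteq> 0"
  proof (rule ccontr)
    assume "\<not> thesis"
    then have "sq_norm8 x = 0"
      using that unfolding sq_norm8_def by (intro sum.neutral) auto
    then show False
      using assms by simp
  qed
  have split: "sq_norm8 x = (x m)\<^sup>2 + (\<Sum>r\<in>{..<8} - {m}. (x r)\<^sup>2)"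
    unfolding sq_norm8_def using m(1) by (simp add: sum.remove)
  have "(x m)\<^sup>2 \<ge> 1"
    using m(2) by (simp add: int_one_le_iff_zero_less)
  moreover have "(\<Sum>r\<in>{..<8} - {m}. (x r)\<^sup>2) \<ge> 0"
    by (simp add: sum_nonneg)
  ultimately have "(x m)\<^sup>2 = 1" "(\<Sum>r\<in>{..<8} - {m}. (x r)\<^sup>2) = 0"
    using split assms by linarith+
  then show ?thesis
    using that m(1) sum_nonneg_eq_0_iff[of "{..<8} - {m}" "\<lambda>r. (x r)\<^sup>2"]
    by (auto simp: power2_eq_1_iff)
qed

lemma column_reducible_norm_1:
  assumes G: "matrix_group G" and gates: "has_elementary_gates G"
    and j: "j < 8" and x: "supported_upto j x" "sq_norm8 x = 1"
  shows "column_reducible G j x 0"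
proof -
  obtain m where m: "m < 8" "x m = 1 \<or> x m = -1" "\<And>r. r < 8 \<Longrightarrow> r \<noteq> m \<Longrightarrow> x r = 0"
    using sq_norm8_eq_1[OF x(2)] by blast
  have "m < Suc j"
    using x(1) m(1,2) unfolding supported_upto_def by (cases "m \<le> j") auto
  define e where "e i r = (if r = i then 1 else (0::int))" for i r :: nat
  have "unit_columns_from (Suc j) (mat 1)"
    by (simp add: unit_columns_from_def mat_def idx_eq_iff[symmetric])
  then have "column_reducible G j (e j) 0"
    using matrix_group_one[OF G] unfolding column_reducible_def e_def
    by (intro bexI[of _ "mat 1"]) (auto simp: ivec8_eq_iff)
  moreover have "swap_mat m j *v ivec8 (e m) = ivec8 (e j)"
    using m(1) j by (simp add: swap_mat_mult_ivec8 ivec8_eq_iff e_def transpose_eq_iff)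
  moreover have "swap_mat m j \<in> G"
    using gates m(1) j unfolding has_elementary_gates_def by blast
  ultimately have em: "column_reducible G j (e m) 0"
    using column_reducible_mult[OF G _ unit_columns_from_swap_mat[OF \<open>m < Suc j\<close> lessI]] by blast
  show ?thesis
  proof (cases "x m = 1")
    case True
    then show ?thesis
      using em m(3) column_reducible_cong[of x "e m"] by (auto simp: e_def)
  next
    case False
    then have "sign_flip m *v ivec8 x = ivec8 (e m)"
      using m by (auto simp: sign_flip_mult_ivec8 ivec8_eq_iff e_def)
    moreover have "sign_flip m \<in> G"
      using gates m(1) unfolding has_elementary_gates_def by blast
    ultimately show ?thesis
      using column_reducible_mult[OF G _ unit_columns_from_sign_flip[OF \<open>m < Suc j\<close>] _ em] by blast
  qed
qed

definition odd_entries :: "(nat \<Rightarrow> int) \<Rightarrow> nat set" where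
  "odd_entries x = {r. r < 8 \<and> odd (x r)}"

definition odd_entries_high :: "(nat \<Rightarrow> int) \<Rightarrow> nat set" where
  "odd_entries_high x = {r. 4 \<le> r \<and> r < 8 \<and> odd (x r)}"

text \<open>Odd entries in the upper half count twice, so that moving one of them into the lower half
  also decreases the measure.\<close>
definition parity_measure :: "(nat \<Rightarrow> int) \<Rightarrow> nat" where
  "parity_measure x = card (odd_entries x) + card (odd_entries_high x)"

lemma finite_odd_entries [simp]: "finite (odd_entries x)" "finite (odd_entries_high x)"
  by (simp_all add: odd_entries_def odd_entries_high_def)

lemma sum_squares_mod_4:
  fixes x :: "'a \<Rightarrow> int"
  assumes "finite A"
  shows "(4::int) dvd (\<Sum>r\<in>A. (x r)\<^sup>2) - int (card {r\<in>A. odd (x r)})"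
proof -
  have "(4::int) dvd (x r)\<^sup>2 - of_bool (odd (x r))" for r
  proof (cases "even (x r)")
    case True
    then obtain b where "x r = 2 * b" by blast
    then show ?thesis by (simp add: power2_eq_square)
  next
    case False
    then obtain b where "x r = 2 * b + 1" using oddE by blast
    then have "(x r)\<^sup>2 - of_bool (odd (x r)) = 4 * (b * b + b)"
      by (simp add: power2_eq_square algebra_simps)
    then show ?thesis by simp
  qed
  then have "(4::int) dvd (\<Sum>r\<in>A. (x r)\<^sup>2 - of_bool (odd (x r)))"
    by (simp add: dvd_sum)
  moreover have "(\<Sum>r\<in>A. of_bool (odd (x r)) :: int) = int (card {r\<in>A. odd (x r)})"
    using assms by (simp add: sum_of_bool_eq Int_def)
  ultimately show ?thesis
    by (simp add: sum_subtractf)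
qed

lemma four_dvd_card_odd_entries:
  assumes "sq_norm8 x = 4 ^ Suc k"
  shows "4 dvd card (odd_entries x)"
proof -
  have "odd_entries x = {r\<in>{..<8}. odd (x r)}"
    by (auto simp: odd_entries_def)
  then have diff: "(4::int) dvd 4 ^ Suc k - int (card (odd_entries x))"
    using sum_squares_mod_4[of "{..<8}" x] assms by (simp add: sq_norm8_def)
  have "(4::int) dvd 4 ^ Suc k - (4 ^ Suc k - int (card (odd_entries x)))"
    by (rule dvd_diff[OF _ diff]) simp
  then have "int 4 dvd int (card (odd_entries x))"
    by simp
  then show ?thesis
    by (simp only: int_dvd_int_iff)
qed

lemma column_reducible_swap_step:
  assumes G: "matrix_group G" and gates: "has_elementary_gates G" and x: "supported_upto j x"
    and p: "p < 4" "even (x p)" and q: "4 \<le> q" "q < 8" "odd (x q)"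
  obtains y where "parity_measure y < parity_measure x" "supported_upto j y" "sq_norm8 y = sq_norm8 x"
    "column_reducible G j y k \<Longrightarrow> column_reducible G j x k"
proof
  let ?t = "Transposition.transpose p q"
  define y where "y = (\<lambda>r. x (?t r))"
  have "q < Suc j"
    using x q unfolding supported_upto_def by (cases "q \<le> j") auto
  then have pj: "p < Suc j"
    using p q by simp
  have t_less: "?t r < 8 \<longleftrightarrow> r < 8" for r
    using p q by (auto simp: Transposition.transpose_def)
  have "odd_entries y = ?t ` odd_entries x"
    by (auto simp: odd_entries_def y_def in_transpose_image_iff t_less)
  then have "card (odd_entries y) = card (odd_entries x)"
    by (simp add: card_image)
  moreover have "odd_entries_high y = odd_entries_high x - {q}"
    using p q by (auto simp: odd_entries_high_def y_def Transposition.transpose_def)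
  then have "card (odd_entries_high y) < card (odd_entries_high x)"
    using q by (intro psubset_card_mono) (auto simp: odd_entries_high_def)
  ultimately show "parity_measure y < parity_measure x"
    by (simp add: parity_measure_def)
  show "supported_upto j y"
    using x pj \<open>q < Suc j\<close> by (auto simp: supported_upto_def y_def Transposition.transpose_def)
  have "bij_betw ?t {..<8} {..<8}"
    using p q by simp
  then show "sq_norm8 y = sq_norm8 x"
    unfolding sq_norm8_def y_def by (rule sum.reindex_bij_betw)
  have "swap_mat p q \<in> G"
    using gates p q unfolding has_elementary_gates_def by simp
  moreover have "swap_mat p q *v ivec8 x = ivec8 y"
    using p q by (simp add: swap_mat_mult_ivec8 y_def)
  ultimately show "column_reducible G j y k \<Longrightarrow> column_reducible G j x k"
    using column_reducible_mult[OF G _ unit_columns_from_swap_mat[OF pj \<open>q < Suc j\<close>]] by blast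
qed

lemma hadamard4_quarters:
  fixes a b c d :: int
  assumes "odd a" "odd b" "odd c" "odd d" "4 dvd a + b + c + d"
  obtains t0 t1 t2 t3 where
    "a + b + c + d = 4 * t0" "a - b + c - d = 4 * t1" "a + b - c - d = 4 * t2" "a - b - c + d = 4 * t3"
    "a = t0 + t1 + t2 + t3" "b = t0 - t1 + t2 - t3" "c = t0 + t1 - t2 - t3" "d = t0 - t1 - t2 + t3"
proof -
  have "4 dvd a - b + c - d" "4 dvd a + b - c - d" "4 dvd a - b - c + d"
    using assms by presburger+
  then obtain t0 t1 t2 t3 where t:
    "a + b + c + d = 4 * t0" "a - b + c - d = 4 * t1" "a + b - c - d = 4 * t2" "a - b - c + d = 4 * t3"
    using assms(5) by (metis dvd_def)
  moreover have
    "a = t0 + t1 + t2 + t3" "b = t0 - t1 + t2 - t3" "c = t0 + t1 - t2 - t3" "d = t0 - t1 - t2 + t3"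
    using t by linarith+
  ultimately show ?thesis
    using that by blast
qed

lemma column_reducible_sign_step:
  assumes G: "matrix_group G" and gates: "has_elementary_gates G" and x: "supported_upto j x"
    and odd: "\<forall>r<4. odd (x r)"
  obtains z where "parity_measure z = parity_measure x" "supported_upto j z" "sq_norm8 z = sq_norm8 x"
    "\<forall>r<4. odd (z r)" "4 dvd z 0 + z 1 + z 2 + z 3"
    "column_reducible G j z k \<Longrightarrow> column_reducible G j x k"
proof (cases "4 dvd x 0 + x 1 + x 2 + x 3")
  case True
  then show ?thesis
    using that[of x] odd x by blast
next
  case False
  define z where "z = x(0 := - x 0)"
  have "odd_entries z = odd_entries x" "odd_entries_high z = odd_entries_high x"
    by (auto simp: odd_entries_def odd_entries_high_def z_def)
  then have "parity_measure z = parity_measure x"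
    by (simp add: parity_measure_def)
  moreover have "supported_upto j z"
    using x by (simp add: supported_upto_def z_def)
  moreover have "sq_norm8 z = sq_norm8 x"
    by (simp add: sq_norm8_def sum_lessThan_8 z_def)
  moreover have "4 dvd z 0 + z 1 + z 2 + z 3"
  proof -
    have "odd (x 0)" "odd (x 1)" "odd (x 2)" "odd (x 3)"
      using odd by simp_all
    then have "4 dvd - x 0 + x 1 + x 2 + x 3"
      using False by presburger
    then show ?thesis
      by (simp add: z_def)
  qed
  moreover have "sign_flip 0 \<in> G"
    using gates unfolding has_elementary_gates_def by simp
  then have "column_reducible G j z k \<Longrightarrow> column_reducible G j x k"
    using column_reducible_mult[OF G _ unit_columns_from_sign_flip sign_flip_mult_ivec8] by (simp add: z_def)
  ultimately show ?thesis
    using that odd by (simp add: z_def)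
qed

lemma K0123_mult_odd_block:
  assumes odd: "\<forall>r<4. odd (x r)" and four: "4 dvd x 0 + x 1 + x 2 + x 3"
  obtains y where "K0123 *v ivec8 x = ivec8 y" "\<forall>r<4. even (y r)" "\<forall>r. 4 \<le> r \<longrightarrow> y r = x r"
    "sq_norm8 y = sq_norm8 x"
proof -
  have odd4: "odd (x 0)" "odd (x 1)" "odd (x 2)" "odd (x 3)"
    using odd by simp_all
  obtain t0 t1 t2 t3 where t:
    "x 0 + x 1 + x 2 + x 3 = 4 * t0" "x 0 - x 1 + x 2 - x 3 = 4 * t1"
    "x 0 + x 1 - x 2 - x 3 = 4 * t2" "x 0 - x 1 - x 2 + x 3 = 4 * t3"
    and xs: "x 0 = t0 + t1 + t2 + t3" "x 1 = t0 - t1 + t2 - t3"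
      "x 2 = t0 + t1 - t2 - t3" "x 3 = t0 - t1 - t2 + t3"
    by (rule hadamard4_quarters[OF odd4 four])
  define y where "y = (\<lambda>r. if r = 0 then 2 * t0 else if r = 1 then 2 * t1
    else if r = 2 then 2 * t2 else if r = 3 then 2 * t3 else x r)"
  have "(of_int (4 * t) :: real) / 2 = of_int (2 * t)" for t
    by simp
  then have image: "K0123 *v ivec8 x = ivec8 y"
    unfolding K0123_mult_ivec8 unfolding ivec8_def vec8_eq_iff all_less_8 using t by (simp add: y_def)
  have "sq_norm8 x = (t0 + t1 + t2 + t3)\<^sup>2 + (t0 - t1 + t2 - t3)\<^sup>2 + (t0 + t1 - t2 - t3)\<^sup>2
      + (t0 - t1 - t2 + t3)\<^sup>2 + (x 4)\<^sup>2 + (x 5)\<^sup>2 + (x 6)\<^sup>2 + (x 7)\<^sup>2"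
    unfolding sq_norm8_def sum_lessThan_8 xs ..
  moreover have "sq_norm8 y = (2 * t0)\<^sup>2 + (2 * t1)\<^sup>2 + (2 * t2)\<^sup>2 + (2 * t3)\<^sup>2
      + (x 4)\<^sup>2 + (x 5)\<^sup>2 + (x 6)\<^sup>2 + (x 7)\<^sup>2"
    unfolding sq_norm8_def sum_lessThan_8 by (simp add: y_def)
  ultimately have "sq_norm8 y = sq_norm8 x"
    by (simp add: power2_eq_square algebra_simps)
  moreover have "\<forall>r<4. even (y r)" "\<forall>r. 4 \<le> r \<longrightarrow> y r = x r"
    by (auto simp: y_def)
  ultimately show ?thesis
    using that[OF image] by blast
qed

lemma column_reducible_hadamard_step:
  assumes G: "matrix_group G" and gates: "has_elementary_gates G" and x: "supported_upto j x"
    and odd: "\<forall>r<4. odd (x r)" and four: "4 dvd x 0 + x 1 + x 2 + x 3"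
  obtains y where "parity_measure y < parity_measure x" "supported_upto j y" "sq_norm8 y = sq_norm8 x"
    "column_reducible G j y k \<Longrightarrow> column_reducible G j x k"
proof -
  obtain y where y: "K0123 *v ivec8 x = ivec8 y" "\<forall>r<4. even (y r)" "\<forall>r. 4 \<le> r \<longrightarrow> y r = x r"
    and norm: "sq_norm8 y = sq_norm8 x"
    by (rule K0123_mult_odd_block[OF odd four])
  have "4 \<le> Suc j"
    using x odd[rule_format, of 3] unfolding supported_upto_def by (cases "3 \<le> j") auto
  then have reduce: "column_reducible G j y k \<Longrightarrow> column_reducible G j x k"
    using column_reducible_mult[OF G _ unit_columns_from_K0123 y(1)] gates
    unfolding has_elementary_gates_def by blast
  have "odd (y r) \<longleftrightarrow> odd (x r) \<and> r \<notin> {0, 1, 2, 3}" for r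
  proof (cases "r < 4")
    case True
    then have "r \<in> {0, 1, 2, 3}"
      by auto
    then show ?thesis
      using True y(2) by blast
  next
    case False
    then show ?thesis
      using y(3) by auto
  qed
  then have "odd_entries y = odd_entries x - {0, 1, 2, 3}"
    by (auto simp: odd_entries_def)
  moreover have sub: "{0, 1, 2, 3} \<subseteq> odd_entries x"
    using odd by (simp add: odd_entries_def)
  moreover have "4 \<le> card (odd_entries x)"
    using card_mono[OF _ sub] by simp
  moreover have "odd_entries_high y = odd_entries_high x"
    using y(3) by (auto simp: odd_entries_high_def)
  ultimately have measure: "parity_measure y < parity_measure x"
    by (simp add: parity_measure_def card_Diff_subset)
  have supp: "supported_upto j y"
    using x y(3) \<open>4 \<le> Suc j\<close> by (auto simp: supported_upto_def)
  show ?thesis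
    using that[OF measure supp norm reduce] .
qed

lemma odd_entry_high:
  assumes norm: "sq_norm8 x = 4 ^ Suc n" and r0: "r0 < 8" "odd (x r0)" and p: "p < 4" "even (x p)"
  obtains q where "4 \<le> q" "q < 8" "odd (x q)"
proof -
  have "r0 \<in> odd_entries x"
    using r0 by (simp add: odd_entries_def)
  then have "card (odd_entries x) \<noteq> 0"
    by auto
  with four_dvd_card_odd_entries[OF norm] have "4 \<le> card (odd_entries x)"
    by (meson dvd_imp_le not_gr0)
  moreover have "odd_entries x \<subseteq> {0, 1, 2, 3} - {p}" if "\<forall>q. 4 \<le> q \<and> q < 8 \<longrightarrow> even (x q)"
  proof
    fix r assume "r \<in> odd_entries x"
    then have "r < 4" "r \<noteq> p"
      using that p by (auto simp: odd_entries_def not_less[symmetric])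
    then show "r \<in> {0, 1, 2, 3} - {p}"
      by auto
  qed
  moreover have "card ({0, 1, 2, 3} - {p}) = 3"
  proof -
    have "p \<in> {0, 1, 2, 3}"
      using p(1) by auto
    then show ?thesis
      by (simp add: card_Diff_singleton)
  qed
  then have "card (odd_entries x) \<le> 3" if "odd_entries x \<subseteq> {0, 1, 2, 3} - {p}"
    using that card_mono[of "{0, 1, 2, 3} - {p}" "odd_entries x"] by simp
  ultimately show ?thesis
    using that by fastforce
qed

lemma parity_measure_decrease:
  assumes G: "matrix_group G" and gates: "has_elementary_gates G" and x: "supported_upto j x"
    and norm: "sq_norm8 x = 4 ^ Suc n" and r0: "r0 < 8" "odd (x r0)"
  obtains y where "parity_measure y < parity_measure x" "supported_upto j y" "sq_norm8 y = sq_norm8 x"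
    "column_reducible G j y k \<Longrightarrow> column_reducible G j x k"
proof (cases "\<forall>r<4. odd (x r)")
  case True
  obtain z where z: "parity_measure z = parity_measure x" "supported_upto j z" "sq_norm8 z = sq_norm8 x"
      "\<forall>r<4. odd (z r)" "4 dvd z 0 + z 1 + z 2 + z 3"
      "column_reducible G j z k \<Longrightarrow> column_reducible G j x k"
    using column_reducible_sign_step[OF G gates x True] by blast
  obtain y where "parity_measure y < parity_measure z" "supported_upto j y" "sq_norm8 y = sq_norm8 z"
      "column_reducible G j y k \<Longrightarrow> column_reducible G j z k"
    using column_reducible_hadamard_step[OF G gates z(2,4,5)] by blast
  then show ?thesis
    using that z by simp
next
  case False
  then obtain p where p: "p < 4" "even (x p)"
    by blast
  then obtain q where "4 \<le> q" "q < 8" "odd (x q)"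
    using odd_entry_high[OF norm r0] by blast
  then show ?thesis
    using column_reducible_swap_step[OF G gates x p] that by blast
qed

lemma column_reducible_all:
  assumes G: "matrix_group G" and gates: "has_elementary_gates G" and j: "j < 8"
  shows "supported_upto j x \<Longrightarrow> sq_norm8 x = 4 ^ k \<Longrightarrow> column_reducible G j x k"
proof (induction k arbitrary: x)
  case 0
  then show ?case
    using column_reducible_norm_1[OF G gates j] by simp
next
  case (Suc k)
  from Suc.prems show ?case
  proof (induction x rule: measure_induct_rule[of parity_measure])
    case (less x)
    show ?case
    proof (cases "\<forall>r<8. even (x r)")
      case True
      define y where "y r = x r div 2" for r
      have x_eq: "x r = 2 * y r" if "r < 8" for r
        using True that by (simp add: y_def)
      have "supported_upto j y"
        using less.prems(1) by (simp add: supported_upto_def y_def)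
      moreover have "sq_norm8 x = 4 * sq_norm8 y"
        unfolding sq_norm8_def sum_distrib_left by (intro sum.cong) (simp_all add: x_eq power_mult_distrib)
      then have "sq_norm8 y = 4 ^ k"
        using less.prems(2) by simp
      ultimately show ?thesis
        using Suc.IH column_reducible_double x_eq by blast
    next
      case False
      then obtain r0 where "r0 < 8" "odd (x r0)"
        by blast
      then obtain y where "parity_measure y < parity_measure x" "supported_upto j y" "sq_norm8 y = sq_norm8 x"
          "column_reducible G j y (Suc k) \<Longrightarrow> column_reducible G j x (Suc k)"
        using parity_measure_decrease[OF G gates less.prems] by blast
      then show ?thesis
        using less.IH less.prems(2) by simp
    qed
  qed
qed

section \<open>Generation\<close>

lemma dyadic_common_denominator:
  assumes "finite A" "\<forall>r\<in>A. dyadic (u r)"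
  obtains K x where "\<forall>r\<in>A. u r = of_int (x r) / 2 ^ K"
proof -
  have "\<forall>r\<in>A. \<exists>p. u r = of_int (fst p) / 2 ^ snd p"
    using assms(2) unfolding dyadic_def by simp
  then obtain p where p: "\<forall>r\<in>A. u r = of_int (fst (p r)) / 2 ^ snd (p r)"
    by (rule bchoice[THEN exE])
  define K where "K = (\<Sum>r\<in>A. snd (p r))"
  have "u r = of_int (fst (p r) * 2 ^ (K - snd (p r))) / 2 ^ K" if "r \<in> A" for r
  proof -
    have "snd (p r) \<le> K"
      unfolding K_def by (rule member_le_sum[OF that _ assms(1)]) simp
    then have "(2::real) ^ K = 2 ^ (K - snd (p r)) * 2 ^ snd (p r)"
      by (simp flip: power_add)
    then show ?thesis
      using p that by simp
  qed
  then show ?thesis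
    using that[of "\<lambda>r. fst (p r) * 2 ^ (K - snd (p r))" K] by blast
qed

lemma orthogonal_matrix_nth8:
  fixes M :: "real^8^8"
  assumes "orthogonal_matrix M" "r < 8" "c < 8"
  shows "(\<Sum>k<8. M $ elem8 k $ elem8 r * M $ elem8 k $ elem8 c) = (if r = c then 1 else 0)"
proof -
  have "transpose M ** M = mat 1"
    using assms(1) by (simp add: orthogonal_matrix)
  then have "(transpose M ** M) $ elem8 r $ elem8 c = mat 1 $ elem8 r $ elem8 c"
    by simp
  then show ?thesis
    using assms(2,3) by (simp add: matrix_mult_nth8 transpose_def mat_def idx_eq_iff[symmetric])
qed

lemma dyadic_orthogonal_column:
  assumes M: "M \<in> O8D" "unit_columns_from (Suc j) M" and j: "j < 8"
  obtains K x where "\<forall>r<8. M $ elem8 r $ elem8 j = of_int (x r) / 2 ^ K"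
    "supported_upto j x" "sq_norm8 x = 4 ^ K"
proof -
  have orth: "orthogonal_matrix M"
    using M(1) by (simp add: O8D_def)
  have dy: "\<forall>r\<in>{..<8}. dyadic (M $ elem8 r $ elem8 j)"
    using M(1) by (simp add: O8D_def)
  obtain K x where x: "\<forall>r\<in>{..<8}. M $ elem8 r $ elem8 j = of_int (x r) / 2 ^ K"
    by (rule dyadic_common_denominator[OF finite_lessThan dy])
  have "M $ elem8 r $ elem8 j = 0" if "j < r" "r < 8" for r
  proof -
    have "(\<Sum>k<8. M $ elem8 k $ elem8 r * M $ elem8 k $ elem8 j)
        = (\<Sum>k<8. if k = r then M $ elem8 k $ elem8 j else 0)"
      using M(2) that by (intro sum.cong) (auto simp: unit_columns_from_def)
    then show ?thesis
      using orthogonal_matrix_nth8[OF orth \<open>r < 8\<close> j] that by simp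
  qed
  then have supp: "supported_upto j x"
    using x by (simp add: supported_upto_def)
  have "(\<Sum>r<8. (of_int (x r) / 2 ^ K)\<^sup>2) = (1::real)"
    using orthogonal_matrix_nth8[OF orth j j] x by (simp add: power2_eq_square)
  then have "(\<Sum>r<8. (of_int (x r))\<^sup>2) / (2 ^ K)\<^sup>2 = (1::real)"
    by (simp add: power_divide sum_divide_distrib)
  then have "of_int (sq_norm8 x) = ((2::real) ^ K)\<^sup>2"
    by (simp add: sq_norm8_def)
  also have "\<dots> = of_int (4 ^ K)"
    by (simp add: power_even_eq[symmetric] power_mult)
  finally have norm: "sq_norm8 x = 4 ^ K"
    by (simp only: of_int_eq_iff)
  show ?thesis
    using that[of x K] x supp norm by simp
qed

lemma matrix_mult_nth8_column:
  "(A ** B) $ elem8 r $ elem8 c = (A *v vec8 (\<lambda>k. B $ elem8 k $ elem8 c)) $ elem8 r"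
  using sum_UNIV_8[of "\<lambda>k. A $ elem8 r $ elem8 k * B $ elem8 k $ elem8 c"]
  by (simp add: matrix_mult_nth8 matrix_vector_mult_def vec8_def)

lemma reduce_column:
  assumes G: "matrix_group G" "G \<subseteq> O8D" and gates: "has_elementary_gates G"
    and M: "M \<in> O8D" "unit_columns_from (Suc j) M" and j: "j < 8"
  obtains N where "N \<in> G" "unit_columns_from j (N ** M)"
proof -
  obtain K x where x: "\<forall>r<8. M $ elem8 r $ elem8 j = of_int (x r) / 2 ^ K"
    and supp: "supported_upto j x" and norm: "sq_norm8 x = 4 ^ K"
    by (rule dyadic_orthogonal_column[OF M j])
  obtain N where N: "N \<in> G" "unit_columns_from (Suc j) N"
    "N *v ivec8 x = ivec8 (\<lambda>r. if r = j then 2 ^ K else 0)"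
    using column_reducible_all[OF G(1) gates j supp norm] unfolding column_reducible_def by blast
  have "(N ** M) $ elem8 r $ elem8 c = (if r = c then 1 else 0)" if rc: "r < 8" "c < 8" "j \<le> c" for r c
  proof (cases "c = j")
    case True
    have "(1 / 2 ^ K) *\<^sub>R ivec8 x = vec8 (\<lambda>k. of_int (x k) / 2 ^ K)"
      by (simp add: ivec8_def vec8_def vec_eq_iff)
    also have "\<dots> = vec8 (\<lambda>k. M $ elem8 k $ elem8 j)"
      using x by (simp add: vec8_eq_iff)
    finally have column: "vec8 (\<lambda>k. M $ elem8 k $ elem8 j) = (1 / 2 ^ K) *\<^sub>R ivec8 x" ..
    have "N *v vec8 (\<lambda>k. M $ elem8 k $ elem8 j) = (1 / 2 ^ K) *\<^sub>R (N *v ivec8 x)"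
      unfolding column by (rule matrix_vector_mult_scaleR)
    also have "\<dots> = vec8 (\<lambda>r. if r = j then 1 else 0)"
      unfolding N(3) by (simp add: ivec8_def vec8_def vec_eq_iff)
    finally have "N *v vec8 (\<lambda>k. M $ elem8 k $ elem8 j) = vec8 (\<lambda>r. if r = j then 1 else 0)" .
    then show ?thesis
      using True rc by (simp add: matrix_mult_nth8_column vec8_def)
  next
    case False
    then have "(N ** M) $ elem8 r $ elem8 c = (\<Sum>k<8. if k = c then N $ elem8 r $ elem8 k else 0)"
      unfolding matrix_mult_nth8 using M(2) rc by (intro sum.cong) (auto simp: unit_columns_from_def)
    then show ?thesis
      using N(2) rc False by (simp add: unit_columns_from_def)
  qed
  then show ?thesis
    using that[OF N(1)] by (simp add: unit_columns_from_def)
qed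

lemma unit_columns_from_in_group:
  assumes G: "matrix_group G" "G \<subseteq> O8D" and gates: "has_elementary_gates G"
  shows "M \<in> O8D \<Longrightarrow> unit_columns_from n M \<Longrightarrow> M \<in> G"
proof (induction n arbitrary: M)
  case 0
  then have "M = mat 1"
    by (subst mat8_entries) (simp add: mat_1_eq_mat8 mat8_eq_iff unit_columns_from_def)
  then show ?case
    using matrix_group_one[OF G(1)] by simp
next
  case (Suc j M)
  show ?case
  proof (cases "j < 8")
    case True
    obtain N where N: "N \<in> G" "unit_columns_from j (N ** M)"
      by (rule reduce_column[OF G gates Suc.prems True])
    have "N ** M \<in> O8D"
      using O8D_mult N(1) G(2) Suc.prems(1) by blast
    then have "N ** M \<in> G"
      using Suc.IH N(2) by blast
    then have "matrix_inv N ** (N ** M) \<in> G"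
      using matrix_group_mult[OF G(1) matrix_group_inv[OF G(1) N(1)]] by blast
    moreover have "matrix_inv N ** N = mat 1"
      using N(1) G(2) matrix_inv_orthogonal[of N] by (auto simp: O8D_def orthogonal_matrix)
    then have "matrix_inv N ** (N ** M) = M"
      by (simp add: matrix_mul_assoc)
    ultimately show ?thesis
      by simp
  next
    case False
    then show ?thesis
      using Suc by (simp add: unit_columns_from_def)
  qed
qed

lemma O8D_subset_group:
  assumes G: "matrix_group G" "G \<subseteq> O8D" and gates: "has_elementary_gates G"
  shows "O8D \<subseteq> G"
proof
  fix M assume "M \<in> O8D"
  moreover have "unit_columns_from 8 M"
    by (simp add: unit_columns_from_def)
  ultimately show "M \<in> G"
    by (rule unit_columns_from_in_group[OF G gates])
qed

lemma has_elementary_gates_Sigma_K: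
  assumes G: "matrix_group G" and gens: "{X0, CX01, CCX12, K0123} \<subseteq> G"
  shows "has_elementary_gates G"
proof -
  have "perm_list (perm_word [ccx_perm, x0_perm, cx_perm, ccx_perm, cx_perm, ccx_perm, x0_perm]) \<in> G"
    by (rule gate_perm_words_in_group[where S = "{}"]) (use G gens in auto)
  then have "perm_list swap67_perm \<in> G"
    unfolding swap67_eq_K0123_conj using gens matrix_group_mult[OF G] by simp
  then have swaps: "swap_mat a b \<in> G" if "a < 8" "b < 8" for a b
    using swap_mat_in_group[OF G swap_mat_0_in_group[OF G]] gens that by simp
  have "sign_flip 2 \<in> G"
    unfolding sign_flip_from_K0123
    using gens perm_list_in_group[OF G swaps] matrix_group_mult[OF G] by (simp add: index_list8_def)
  then have "sign_flip a \<in> G" if "a < 8" for a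
    using sign_flip_in_group[OF G swaps] that by simp
  then show ?thesis
    using swaps gens by (simp add: has_elementary_gates_def)
qed

lemma has_elementary_gates_Sigma_Z:
  assumes G: "matrix_group G" and gens: "{X0, CX01, CCX12, K12, CCZ} \<subseteq> G"
  shows "has_elementary_gates G"
proof -
  have "perm_list (perm_word [ccx_perm, cx_perm, ccx_perm, cx_perm, ccx_perm]) \<in> G"
    by (rule gate_perm_words_in_group[where S = "{}"]) (use G gens in auto)
  then have "perm_list swap67_perm \<in> G"
    unfolding swap67_eq_K12_conj using gens matrix_group_mult[OF G] by simp
  then have swaps: "swap_mat a b \<in> G" if "a < 8" "b < 8" for a b
    using swap_mat_in_group[OF G swap_mat_0_in_group[OF G]] gens that by simp
  have "sign_flip 7 \<in> G"
    using gens by (simp add: CCZ_eq_sign_flip)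
  then have "sign_flip a \<in> G" if "a < 8" for a
    using sign_flip_in_group[OF G swaps] that by simp
  moreover have "K0123 \<in> G"
    unfolding K0123_from_K12
    using gens calculation perm_list_in_group[OF G swaps] matrix_group_mult[OF G]
    by (simp add: index_list8_def)
  ultimately show ?thesis
    using swaps by (simp add: has_elementary_gates_def)
qed

lemma gen_group_eq_O8D:
  assumes "S \<subseteq> O8D" "has_elementary_gates (gen_group S)"
  shows "gen_group S = O8D"
proof
  show "gen_group S \<subseteq> O8D"
    using gen_group_least[OF matrix_group_O8D assms(1)] .
  then show "O8D \<subseteq> gen_group S"
    using O8D_subset_group[OF matrix_group_gen_group _ assms(2)] by blast
qed

section \<open>Minimality\<close>

lemma minimal_generating_setI:
  assumes "gen_group S = G"
    and "\<And>g. g \<in> S \<Longrightarrow> \<exists>H. matrix_group H \<and> S - {g} \<subseteq> H \<and> g \<notin> H"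
  shows "minimal_generating_set S G"
  unfolding minimal_generating_set_def
proof (intro conjI allI impI)
  fix T assume "T \<subset> S"
  then obtain g where g: "g \<in> S" "g \<notin> T"
    by blast
  then obtain H where H: "matrix_group H" "S - {g} \<subseteq> H" "g \<notin> H"
    using assms(2) by blast
  have "gen_group T \<subseteq> H"
    using \<open>T \<subset> S\<close> g H by (intro gen_group_least) auto
  moreover have "g \<in> G"
    using assms(1) g(1) by (blast intro: gen_base)
  ultimately show "gen_group T \<noteq> G"
    using H(3) by blast
qed (use assms(1) in simp)

definition orthogonal_stabilizer :: "real^'n \<Rightarrow> (real^'n^'n) set" where
  "orthogonal_stabilizer v = {M. orthogonal_matrix M \<and> M *v v = v}"

definition orthogonal_centralizer :: "real^'n^'n \<Rightarrow> (real^'n^'n) set" where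
  "orthogonal_centralizer C = {M. orthogonal_matrix M \<and> M ** C = C ** M}"

definition respects_blocks :: "('n \<Rightarrow> bool) \<Rightarrow> bool \<Rightarrow> real^'n^'n \<Rightarrow> bool" where
  "respects_blocks P b M \<longleftrightarrow> (\<forall>i j. M $ i $ j \<noteq> 0 \<longrightarrow> (P i \<longleftrightarrow> P j) = b)"

definition orthogonal_block_respecting :: "('n \<Rightarrow> bool) \<Rightarrow> (real^'n^'n) set" where
  "orthogonal_block_respecting P = {M. orthogonal_matrix M \<and> (\<exists>b. respects_blocks P b M)}"

definition orthogonal_integral :: "(real^'n^'n) set" where
  "orthogonal_integral = {M. orthogonal_matrix M \<and> (\<forall>i j. M $ i $ j \<in> \<int>)}"

definition orthogonal_lattice_stabilizer :: "(real^'n) set \<Rightarrow> (real^'n^'n) set" where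
  "orthogonal_lattice_stabilizer L =
     {M. orthogonal_matrix M \<and> (\<forall>v\<in>L. M *v v \<in> L) \<and> (\<forall>v\<in>L. transpose M *v v \<in> L)}"

lemma matrix_group_orthogonal_stabilizer: "matrix_group (orthogonal_stabilizer v)"
proof (rule matrix_group_orthogonalI)
  show "transpose A \<in> orthogonal_stabilizer v" if "A \<in> orthogonal_stabilizer v" for A
  proof -
    have A: "orthogonal_matrix A" "A *v v = v"
      using that by (auto simp: orthogonal_stabilizer_def)
    have "transpose A *v v = transpose A *v (A *v v)"
      using A(2) by simp
    also have "\<dots> = (transpose A ** A) *v v"
      by (rule matrix_vector_mul_assoc)
    also have "\<dots> = v"
      using A(1) by (simp add: orthogonal_matrix)
    finally show ?thesis
      using A(1) by (simp add: orthogonal_stabilizer_def del: transpose_matrix_vector)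
  qed
qed (auto simp: orthogonal_stabilizer_def orthogonal_matrix_id orthogonal_matrix_mul
    matrix_vector_mul_assoc[symmetric])

lemma matrix_group_orthogonal_centralizer: "matrix_group (orthogonal_centralizer C)"
proof (rule matrix_group_orthogonalI)
  show "A ** B \<in> orthogonal_centralizer C"
    if "A \<in> orthogonal_centralizer C" "B \<in> orthogonal_centralizer C" for A B
  proof -
    have a: "A ** C = C ** A" and b: "B ** C = C ** B"
      using that by (auto simp: orthogonal_centralizer_def)
    have "A ** B ** C = A ** (B ** C)"
      by (simp add: matrix_mul_assoc)
    also have "\<dots> = A ** C ** B"
      using b by (simp add: matrix_mul_assoc)
    also have "\<dots> = C ** (A ** B)"
      using a by (simp add: matrix_mul_assoc)
    finally show ?thesis
      using that by (simp add: orthogonal_centralizer_def orthogonal_matrix_mul)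
  qed
  show "transpose A \<in> orthogonal_centralizer C" if "A \<in> orthogonal_centralizer C" for A
  proof -
    have A: "transpose A ** A = mat 1" "A ** transpose A = mat 1" "A ** C = C ** A"
      using that by (auto simp: orthogonal_centralizer_def orthogonal_matrix_def)
    have "transpose A ** C = transpose A ** C ** (A ** transpose A)"
      using A(2) by simp
    also have "\<dots> = transpose A ** (C ** A) ** transpose A"
      by (simp add: matrix_mul_assoc)
    also have "\<dots> = transpose A ** (A ** C) ** transpose A"
      using A(3) by simp
    also have "\<dots> = C ** transpose A"
      using A(1) by (simp add: matrix_mul_assoc)
    finally show ?thesis
      using that by (simp add: orthogonal_centralizer_def)
  qed
qed (auto simp: orthogonal_centralizer_def orthogonal_matrix_id)

lemma respects_blocks_mult:
  assumes A: "respects_blocks P a A" and B: "respects_blocks P b B"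
  shows "respects_blocks P (a \<longleftrightarrow> b) (A ** B)"
  unfolding respects_blocks_def
proof (intro allI impI)
  fix i j assume "(A ** B) $ i $ j \<noteq> 0"
  then have "(\<Sum>k\<in>UNIV. A $ i $ k * B $ k $ j) \<noteq> 0"
    by (simp add: matrix_matrix_mult_def)
  then obtain k where "A $ i $ k * B $ k $ j \<noteq> 0"
    using sum.not_neutral_contains_not_neutral by blast
  then have "A $ i $ k \<noteq> 0" "B $ k $ j \<noteq> 0"
    by simp_all
  then have "(P i \<longleftrightarrow> P k) = a" "(P k \<longleftrightarrow> P j) = b"
    using A B unfolding respects_blocks_def by blast+
  then show "(P i \<longleftrightarrow> P j) = (a \<longleftrightarrow> b)"
    by (cases "P k") auto
qed

lemma respects_blocks_transpose: "respects_blocks P b A \<Longrightarrow> respects_blocks P b (transpose A)"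
  unfolding respects_blocks_def transpose_def by (metis (no_types, lifting) vec_lambda_beta)

lemma matrix_group_orthogonal_block_respecting: "matrix_group (orthogonal_block_respecting P)"
proof (rule matrix_group_orthogonalI)
  have "respects_blocks P True (mat 1)"
    by (simp add: respects_blocks_def mat_def)
  then show "mat 1 \<in> orthogonal_block_respecting P"
    unfolding orthogonal_block_respecting_def using orthogonal_matrix_id by blast
  show "A ** B \<in> orthogonal_block_respecting P"
    if "A \<in> orthogonal_block_respecting P" "B \<in> orthogonal_block_respecting P" for A B
    using that respects_blocks_mult orthogonal_matrix_mul
    unfolding orthogonal_block_respecting_def by blast
  show "transpose A \<in> orthogonal_block_respecting P" if "A \<in> orthogonal_block_respecting P" for A
    using that respects_blocks_transpose unfolding orthogonal_block_respecting_def by auto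
qed (simp add: orthogonal_block_respecting_def)

lemma matrix_group_orthogonal_integral: "matrix_group orthogonal_integral"
proof (rule matrix_group_orthogonalI)
  show "mat 1 \<in> orthogonal_integral"
    using orthogonal_matrix_id by (simp add: orthogonal_integral_def mat_def)
  show "A ** B \<in> orthogonal_integral" if "A \<in> orthogonal_integral" "B \<in> orthogonal_integral" for A B
  proof -
    have "(A ** B) $ i $ j \<in> \<int>" for i j
      using that by (auto simp: orthogonal_integral_def matrix_matrix_mult_def intro!: Ints_sum Ints_mult)
    then show ?thesis
      using that by (simp add: orthogonal_integral_def orthogonal_matrix_mul)
  qed
  show "transpose A \<in> orthogonal_integral" if "A \<in> orthogonal_integral" for A
  proof -
    have "transpose A $ i $ j = A $ j $ i" for i j
      by (simp add: transpose_def)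
    then show ?thesis
      using that by (simp add: orthogonal_integral_def)
  qed
qed (simp add: orthogonal_integral_def)

lemma matrix_group_orthogonal_lattice_stabilizer: "matrix_group (orthogonal_lattice_stabilizer L)"
proof (rule matrix_group_orthogonalI)
  show "transpose A \<in> orthogonal_lattice_stabilizer L" if "A \<in> orthogonal_lattice_stabilizer L" for A
    using that by (simp add: orthogonal_lattice_stabilizer_def del: transpose_matrix_vector)
qed (auto simp: orthogonal_lattice_stabilizer_def orthogonal_matrix_id orthogonal_matrix_mul
    matrix_transpose_mul matrix_vector_mul_assoc[symmetric] simp del: transpose_matrix_vector)

text \<open>\<open>H \<otimes> H\<close> fixes \<open>(2, 1, 1, 0)\<close>, and the controlled gates only move \<open>e\<^sub>3, \<dots>, e\<^sub>7\<close>.\<close>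
lemma gates_in_orthogonal_stabilizer:
  "CX01 \<in> orthogonal_stabilizer (lvec [2, 1, 1, 0, 0, 0, 0, 0])"
  "CCX12 \<in> orthogonal_stabilizer (lvec [2, 1, 1, 0, 0, 0, 0, 0])"
  "K0123 \<in> orthogonal_stabilizer (lvec [2, 1, 1, 0, 0, 0, 0, 0])"
  "K12 \<in> orthogonal_stabilizer (lvec [2, 1, 1, 0, 0, 0, 0, 0])"
  "CCZ \<in> orthogonal_stabilizer (lvec [2, 1, 1, 0, 0, 0, 0, 0])"
  "X0 \<notin> orthogonal_stabilizer (lvec [2, 1, 1, 0, 0, 0, 0, 0])"
  using gates_orthogonal unfolding orthogonal_stabilizer_def gates_eq_lmat
  by (simp_all add: lmat_mult_lvec lvec_eq_iff all_less_8 list_matrix_eval)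

definition qubit_swap12 :: "real^8^8" where
  "qubit_swap12 = perm_list [0, 2, 1, 3, 4, 6, 5, 7]"

lemma gates_in_orthogonal_centralizer:
  "X0 \<in> orthogonal_centralizer qubit_swap12"
  "CCX12 \<in> orthogonal_centralizer qubit_swap12"
  "K0123 \<in> orthogonal_centralizer qubit_swap12"
  "K12 \<in> orthogonal_centralizer qubit_swap12"
  "CCZ \<in> orthogonal_centralizer qubit_swap12"
  "CX01 \<notin> orthogonal_centralizer qubit_swap12"
  using gates_orthogonal unfolding orthogonal_centralizer_def gates_eq_lmat qubit_swap12_def perm_list_eq_lmat
  by (simp_all add: lmat_mult lmat_eq_iff all_less_8 list_matrix_eval)

lemma lmat_in_orthogonal_block_respecting:
  assumes "orthogonal_matrix (lmat L)" "\<forall>r<8. \<forall>c<8. L ! r ! c \<noteq> 0 \<longrightarrow> (r < 4 \<longleftrightarrow> c < 4) = b"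
  shows "lmat L \<in> orthogonal_block_respecting (\<lambda>i. idx i < 4)"
proof -
  have "respects_blocks (\<lambda>i. idx i < 4) b (lmat L)"
    using assms(2) by (simp add: respects_blocks_def lmat_def)
  then show ?thesis
    using assms(1) unfolding orthogonal_block_respecting_def by blast
qed

lemma gates_in_orthogonal_block_respecting:
  "X0 \<in> orthogonal_block_respecting (\<lambda>i. idx i < 4)"
  "CX01 \<in> orthogonal_block_respecting (\<lambda>i. idx i < 4)"
  "K0123 \<in> orthogonal_block_respecting (\<lambda>i. idx i < 4)"
  "K12 \<in> orthogonal_block_respecting (\<lambda>i. idx i < 4)"
  "CCZ \<in> orthogonal_block_respecting (\<lambda>i. idx i < 4)"
proof -
  show "X0 \<in> orthogonal_block_respecting (\<lambda>i. idx i < 4)"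
    using gates_orthogonal(1) unfolding X0_eq_lmat
    by (rule lmat_in_orthogonal_block_respecting[where b = False]) (simp add: all_less_8)
  show "CX01 \<in> orthogonal_block_respecting (\<lambda>i. idx i < 4)"
    using gates_orthogonal(2) unfolding CX01_eq_lmat
    by (rule lmat_in_orthogonal_block_respecting[where b = True]) (simp add: all_less_8)
  show "K0123 \<in> orthogonal_block_respecting (\<lambda>i. idx i < 4)"
    using gates_orthogonal(4) unfolding K0123_eq_lmat
    by (rule lmat_in_orthogonal_block_respecting[where b = True]) (simp add: all_less_8)
  show "K12 \<in> orthogonal_block_respecting (\<lambda>i. idx i < 4)"
    using gates_orthogonal(5) unfolding K12_eq_lmat
    by (rule lmat_in_orthogonal_block_respecting[where b = True]) (simp add: all_less_8)
  show "CCZ \<in> orthogonal_block_respecting (\<lambda>i. idx i < 4)"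
    using gates_orthogonal(6) unfolding CCZ_eq_lmat
    by (rule lmat_in_orthogonal_block_respecting[where b = True]) (simp add: all_less_8)
qed

lemma CCX12_notin_orthogonal_block_respecting: "CCX12 \<notin> orthogonal_block_respecting (\<lambda>i. idx i < 4)"
proof
  assume "CCX12 \<in> orthogonal_block_respecting (\<lambda>i. idx i < 4)"
  then obtain b where b: "respects_blocks (\<lambda>i. idx i < 4) b CCX12"
    unfolding orthogonal_block_respecting_def by blast
  have "CCX12 $ elem8 3 $ elem8 7 \<noteq> 0" "CCX12 $ elem8 0 $ elem8 0 \<noteq> 0"
    by (simp_all add: CCX12_eq_lmat lmat_def)
  then have "(idx (elem8 3) < 4 \<longleftrightarrow> idx (elem8 7) < 4) = b" "(idx (elem8 0) < 4 \<longleftrightarrow> idx (elem8 0) < 4) = b"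
    using b unfolding respects_blocks_def by blast+
  then show False
    by simp
qed

lemma half_notin_Ints: "(1 / 2 :: real) \<notin> \<int>"
proof
  assume "(1 / 2 :: real) \<in> \<int>"
  then obtain n :: int where "1 / 2 = (of_int n :: real)"
    by (auto elim: Ints_cases)
  then have "(1::real) = of_int (2 * n)"
    by simp
  then have "1 = 2 * n"
    by (simp only: of_int_eq_1_iff[symmetric])
  then show False
    by presburger
qed

lemma gates_in_orthogonal_integral:
  "X0 \<in> orthogonal_integral" "CX01 \<in> orthogonal_integral" "CCX12 \<in> orthogonal_integral"
  "CCZ \<in> orthogonal_integral"
  "K0123 \<notin> orthogonal_integral" "K12 \<notin> orthogonal_integral"
proof -
  have int: "lmat L \<in> orthogonal_integral"
    if "orthogonal_matrix (lmat L)" "\<forall>r<8. \<forall>c<8. L ! r ! c \<in> \<int>" for L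
    using that by (simp add: orthogonal_integral_def lmat_def)
  show "X0 \<in> orthogonal_integral" "CX01 \<in> orthogonal_integral" "CCX12 \<in> orthogonal_integral"
    "CCZ \<in> orthogonal_integral"
    using gates_orthogonal unfolding gates_eq_lmat by (simp_all add: int all_less_8)
  have "K0123 $ elem8 0 $ elem8 0 = 1 / 2" "K12 $ elem8 0 $ elem8 0 = 1 / 2"
    by (simp_all add: K0123_eq_lmat K12_eq_lmat lmat_def)
  then show "K0123 \<notin> orthogonal_integral" "K12 \<notin> orthogonal_integral"
    using half_notin_Ints unfolding orthogonal_integral_def by (metis (mono_tags, lifting) mem_Collect_eq)+
qed

text \<open>The \<open>E\<^sub>8\<close> lattice \<open>D\<^sub>8 \<union> (D\<^sub>8 + (1/2, \<dots>, 1/2))\<close>, in doubled coordinates \<open>a\<close>.\<close>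
definition E8_lattice :: "(real^8) set" where
  "E8_lattice = {vec8 (\<lambda>r. of_int (a r) / 2) | a. (\<forall>r<8. even (a r - a 0)) \<and> 4 dvd (\<Sum>r<8. a r)}"

lemma E8_latticeI:
  "(\<forall>r<8. even (a r - a 0)) \<Longrightarrow> 4 dvd (\<Sum>r<8. a r) \<Longrightarrow> vec8 (\<lambda>r. of_int (a r) / 2) \<in> E8_lattice"
  unfolding E8_lattice_def by blast

lemma E8_latticeE:
  assumes "v \<in> E8_lattice"
  obtains a where "v = vec8 (\<lambda>r. of_int (a r) / 2)" "\<forall>r<8. even (a r - a 0)" "4 dvd (\<Sum>r<8. a r)"
  using assms unfolding E8_lattice_def by blast

lemma orthogonal_lattice_stabilizer_symmetric:
  assumes "orthogonal_matrix M" "transpose M = M" "\<And>v. v \<in> L \<Longrightarrow> M *v v \<in> L"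
  shows "M \<in> orthogonal_lattice_stabilizer L"
  using assms by (simp add: orthogonal_lattice_stabilizer_def del: transpose_matrix_vector)

definition involution_list8 :: "nat list \<Rightarrow> bool" where
  "involution_list8 P \<longleftrightarrow> index_list8 P \<and> (\<forall>r<8. P ! (P ! r) = r)"

lemma involution_list8_iff:
  assumes "involution_list8 P" "r < 8" "c < 8"
  shows "r = P ! c \<longleftrightarrow> c = P ! r"
proof -
  have "P ! (P ! c) = c" "P ! (P ! r) = r"
    using assms by (simp_all add: involution_list8_def)
  then show ?thesis
    by auto
qed

lemma transpose_perm_list_involution: "involution_list8 P \<Longrightarrow> transpose (perm_list P) = perm_list P"
  unfolding perm_list_def perm_mat_eq_mat8 transpose_mat8
proof (rule mat8_eqI)
  fix r c :: nat assume "involution_list8 P" "r < 8" "c < 8"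
  then show "(if c = P ! r then 1 else 0) = (if r = P ! c then 1 else (0::real))"
    using involution_list8_iff[of P r c] by simp
qed

lemma perm_list_involution_mult_vec8:
  assumes P: "involution_list8 P"
  shows "perm_list P *v vec8 u = vec8 (\<lambda>r. u (P ! r))"
  unfolding perm_list_def perm_mat_eq_mat8 mat8_mult_vec8 vec8_eq_iff
proof (intro allI impI)
  fix r :: nat assume "r < 8"
  then have "fmat_apply (\<lambda>r c. if r = P ! c then 1 else 0) u r = (\<Sum>c<8. if c = P ! r then u c else 0)"
    unfolding fmat_apply_def by (intro sum.cong) (use involution_list8_iff[OF P, of r] in auto)
  also have "\<dots> = u (P ! r)"
    using P \<open>r < 8\<close> by (simp add: involution_list8_def index_list8_def)
  finally show "fmat_apply (\<lambda>r c. if r = P ! c then 1 else 0) u r = u (P ! r)" .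
qed

lemma E8_lattice_permute:
  assumes P: "involution_list8 P" and par: "\<forall>r<8. even (a r - a 0)" and four: "4 dvd (\<Sum>r<8. a r)"
  shows "vec8 (\<lambda>r. of_int (a (P ! r)) / 2) \<in> E8_lattice"
proof -
  have P_less: "P ! r < 8" if "r < 8" for r
    using P that by (simp add: involution_list8_def index_list8_def)
  have "P ! 0 < 8"
    using P_less by simp
  then have par0: "even (a (P ! 0) - a 0)"
    using par by blast
  have "\<forall>r<8. even (a (P ! r) - a (P ! 0))"
  proof (intro allI impI)
    fix r :: nat assume "r < 8"
    then have "even (a (P ! r) - a 0)"
      using par P_less by blast
    then have "even ((a (P ! r) - a 0) - (a (P ! 0) - a 0))"
      using par0 by (rule dvd_diff)
    moreover have "(a (P ! r) - a 0) - (a (P ! 0) - a 0) = a (P ! r) - a (P ! 0)"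
      by simp
    ultimately show "even (a (P ! r) - a (P ! 0))"
      by (simp only:)
  qed
  moreover have "(\<Sum>r<8. a (P ! r)) = (\<Sum>r<8. a r)"
  proof (rule sum.reindex_bij_witness[where i = "(!) P" and j = "(!) P"])
  qed (use P P_less in \<open>auto simp: involution_list8_def\<close>)
  then have "4 dvd (\<Sum>r<8. a (P ! r))"
    using four by (simp only:)
  ultimately show ?thesis
    by (rule E8_latticeI)
qed

lemma involution_perm_list_in_E8_stabilizer:
  assumes P: "involution_list8 P" and orth: "orthogonal_matrix (perm_list P)"
  shows "perm_list P \<in> orthogonal_lattice_stabilizer E8_lattice"
proof (rule orthogonal_lattice_stabilizer_symmetric[OF orth transpose_perm_list_involution[OF P]])
  fix v assume "v \<in> E8_lattice"
  then obtain a where v: "v = vec8 (\<lambda>r. of_int (a r) / 2)"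
    and par: "\<forall>r<8. even (a r - a 0)" and four: "4 dvd (\<Sum>r<8. a r)"
    by (rule E8_latticeE)
  show "perm_list P *v v \<in> E8_lattice"
    unfolding v perm_list_involution_mult_vec8[OF P] by (rule E8_lattice_permute[OF P par four])
qed

lemma permutation_gates_in_E8_stabilizer:
  "X0 \<in> orthogonal_lattice_stabilizer E8_lattice"
  "CX01 \<in> orthogonal_lattice_stabilizer E8_lattice"
  "CCX12 \<in> orthogonal_lattice_stabilizer E8_lattice"
  using gates_orthogonal(1-3)
  unfolding X0_eq_perm_list CX01_eq_perm_list CCX12_eq_perm_list
  by (simp_all add: involution_perm_list_in_E8_stabilizer involution_list8_def index_list8_def gate_perms
      all_less_8)

lemma E8_latticeE_offsets:
  assumes "v \<in> E8_lattice"
  obtains a0 d where "v = vec8 (\<lambda>r. of_int (a0 + 2 * d r) / 2)" "even (\<Sum>r<8. d r)"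
proof -
  obtain a where v: "v = vec8 (\<lambda>r. of_int (a r) / 2)"
    and par: "\<forall>r<8. even (a r - a 0)" and four: "4 dvd (\<Sum>r<8. a r)"
    using assms by (rule E8_latticeE)
  define d where "d r = (a r - a 0) div 2" for r
  have a_eq: "a r = a 0 + 2 * d r" if "r < 8" for r
  proof -
    have "even (a r - a 0)"
      using par that by blast
    then have "2 * d r = a r - a 0"
      unfolding d_def by (rule even_two_times_div_two)
    then show ?thesis
      by linarith
  qed
  then have "v = vec8 (\<lambda>r. of_int (a 0 + 2 * d r) / 2)"
    unfolding v vec8_eq_iff by metis
  moreover have "(\<Sum>r<8. a r) = (\<Sum>r<8. a 0 + 2 * d r)"
    using a_eq by (intro sum.cong) blast+
  then have "(\<Sum>r<8. a r) = 8 * a 0 + 2 * (\<Sum>r<8. d r)"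
    by (simp add: sum.distrib sum_distrib_left)
  then have "even (\<Sum>r<8. d r)"
    using four by presburger
  ultimately show ?thesis
    using that by blast
qed

lemma K12_preserves_E8_lattice:
  assumes "v \<in> E8_lattice"
  shows "K12 *v v \<in> E8_lattice"
proof -
  obtain a0 d where v: "v = vec8 (\<lambda>r. of_int (a0 + 2 * d r) / 2)" and "even (\<Sum>r<8. d r)"
    using assms by (rule E8_latticeE_offsets)
  define S where "S = (\<Sum>r<8. d r)"
  have "even S"
    unfolding S_def by fact
  define b where "b = (\<lambda>r::nat. if r = 0 then 2 * a0 + d 0 + d 1 + d 2 + d 3
    else if r = 1 then d 0 - d 1 + d 2 - d 3 else if r = 2 then d 0 + d 1 - d 2 - d 3
    else if r = 3 then d 0 - d 1 - d 2 + d 3 else if r = 4 then 2 * a0 + d 4 + d 5 + d 6 + d 7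
    else if r = 5 then d 4 - d 5 + d 6 - d 7 else if r = 6 then d 4 + d 5 - d 6 - d 7
    else d 4 - d 5 - d 6 + d 7)"
  have image: "K12 *v v = vec8 (\<lambda>r. of_int (b r) / 2)"
    unfolding v K12_eq_lmat lmat_def mat8_mult_vec8 vec8_eq_iff all_less_8
    by (simp add: fmat_apply_def sum_lessThan_8 b_def field_simps)
  have "b 1 - b 0 = 2 * (- a0 - d 1 - d 3)" "b 2 - b 0 = 2 * (- a0 - d 2 - d 3)"
    "b 3 - b 0 = 2 * (- a0 - d 1 - d 2)" "b 4 - b 0 = S - 2 * (d 0 + d 1 + d 2 + d 3)"
    "b 5 - b 0 = S - 2 * (a0 + d 0 + d 1 + d 2 + d 3 + d 5 + d 7)"
    "b 6 - b 0 = S - 2 * (a0 + d 0 + d 1 + d 2 + d 3 + d 6 + d 7)"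
    "b 7 - b 0 = S - 2 * (a0 + d 0 + d 1 + d 2 + d 3 + d 5 + d 6)"
    by (simp_all add: b_def S_def sum_lessThan_8)
  then have "\<forall>r<8. even (b r - b 0)"
    unfolding all_less_8 using \<open>even S\<close> by simp
  moreover have "4 dvd (\<Sum>r<8. b r)"
    by (simp add: sum_lessThan_8 b_def)
  ultimately have "vec8 (\<lambda>r. of_int (b r) / 2) \<in> E8_lattice"
    by (rule E8_latticeI)
  then show ?thesis
    unfolding image .
qed

lemma K12_in_E8_stabilizer: "K12 \<in> orthogonal_lattice_stabilizer E8_lattice"
proof (rule orthogonal_lattice_stabilizer_symmetric[OF gates_orthogonal(5) _ K12_preserves_E8_lattice])
  show "transpose K12 = K12"
    unfolding K12_eq_lmat by (simp add: transpose_lmat lmat_eq_iff all_less_8 list_matrix_eval)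
qed

lemma CCZ_notin_E8_stabilizer: "CCZ \<notin> orthogonal_lattice_stabilizer E8_lattice"
proof
  assume "CCZ \<in> orthogonal_lattice_stabilizer E8_lattice"
  moreover have "vec8 (\<lambda>r. of_int 1 / 2) \<in> E8_lattice"
    by (rule E8_latticeI) (simp_all add: sum_lessThan_8)
  ultimately have "CCZ *v vec8 (\<lambda>r. of_int 1 / 2) \<in> E8_lattice"
    unfolding orthogonal_lattice_stabilizer_def by blast
  then obtain a where a: "CCZ *v vec8 (\<lambda>r. of_int 1 / 2) = vec8 (\<lambda>r. of_int (a r) / 2)"
    and four: "4 dvd (\<Sum>r<8. a r)"
    by (rule E8_latticeE)
  have "CCZ *v vec8 (\<lambda>r. of_int 1 / 2) = vec8 (\<lambda>r. of_int (if r = 7 then -1 else 1) / 2)"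
    unfolding CCZ_eq_lmat lmat_def mat8_mult_vec8 vec8_eq_iff all_less_8
    by (simp add: fmat_apply_def sum_lessThan_8)
  then have "\<forall>r<8. a r = (if r = 7 then -1 else 1)"
    using a by (simp add: vec8_eq_iff)
  then have "(\<Sum>r<8. a r) = 6"
    unfolding all_less_8 sum_lessThan_8 by simp
  then show False
    using four by simp
qed

lemma minimal_generating_set_Sigma_K: "minimal_generating_set {X0, CX01, CCX12, K0123} O8D"
proof (rule minimal_generating_setI)
  show "gen_group {X0, CX01, CCX12, K0123} = O8D"
    using gates_in_O8D has_elementary_gates_Sigma_K[OF matrix_group_gen_group subset_gen_group]
    by (intro gen_group_eq_O8D) auto
  fix g assume "g \<in> {X0, CX01, CCX12, K0123}"
  then consider "g = X0" | "g = CX01" | "g = CCX12" | "g = K0123"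
    by blast
  then show "\<exists>H. matrix_group H \<and> {X0, CX01, CCX12, K0123} - {g} \<subseteq> H \<and> g \<notin> H"
  proof cases
    case 1
    then show ?thesis
      using matrix_group_orthogonal_stabilizer gates_in_orthogonal_stabilizer by blast
  next
    case 2
    then show ?thesis
      using matrix_group_orthogonal_centralizer gates_in_orthogonal_centralizer by blast
  next
    case 3
    then show ?thesis
      using matrix_group_orthogonal_block_respecting gates_in_orthogonal_block_respecting
        CCX12_notin_orthogonal_block_respecting by blast
  next
    case 4
    then show ?thesis
      using matrix_group_orthogonal_integral gates_in_orthogonal_integral by blast
  qed
qed

lemma minimal_generating_set_Sigma_Z: "minimal_generating_set {X0, CX01, CCX12, K12, CCZ} O8D"
proof (rule minimal_generating_setI)
  show "gen_group {X0, CX01, CCX12, K12, CCZ} = O8D"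
    using gates_in_O8D has_elementary_gates_Sigma_Z[OF matrix_group_gen_group subset_gen_group]
    by (intro gen_group_eq_O8D) auto
  fix g assume "g \<in> {X0, CX01, CCX12, K12, CCZ}"
  then consider "g = X0" | "g = CX01" | "g = CCX12" | "g = K12" | "g = CCZ"
    by blast
  then show "\<exists>H. matrix_group H \<and> {X0, CX01, CCX12, K12, CCZ} - {g} \<subseteq> H \<and> g \<notin> H"
  proof cases
    case 1
    then show ?thesis
      using matrix_group_orthogonal_stabilizer gates_in_orthogonal_stabilizer by blast
  next
    case 2
    then show ?thesis
      using matrix_group_orthogonal_centralizer gates_in_orthogonal_centralizer by blast
  next
    case 3
    then show ?thesis
      using matrix_group_orthogonal_block_respecting gates_in_orthogonal_block_respecting
        CCX12_notin_orthogonal_block_respecting by blast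
  next
    case 4
    then show ?thesis
      using matrix_group_orthogonal_integral gates_in_orthogonal_integral by blast
  next
    case 5
    then show ?thesis
      using matrix_group_orthogonal_lattice_stabilizer permutation_gates_in_E8_stabilizer
        K12_in_E8_stabilizer CCZ_notin_E8_stabilizer by blast
  qed
qed

theorem theorem5:
  shows "minimal_generating_set {X0, CX01, CCX12, K0123} O8D \<and>
         minimal_generating_set {X0, CX01, CCX12, K12, CCZ} O8D"
  using minimal_generating_set_Sigma_K minimal_generating_set_Sigma_Z ..

end
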